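(* Let $\mathbf J=(\mathcal A^+,\mathcal A^-,\mathcal B^+,\mathcal B^-,\Gamma^+,\Gamma^-)$ arise as the limit of a sequence of extreme character parameters $\omega(N)$ as in the hypotheses below, and let $\mathbf F=\mathbf F_{\mathbf J}$ be the function defined below (extended to $1+\mathbb H$ by the same formula). Then for every $y\in\mathbb R$ and $\eta>0$ the equation $$\frac1z+1+\frac{(1+z)\mathbf F(1+z)}{\eta}=\frac y\eta$$ has at most one root $z$ in the upper half-plane $\mathbb H=\{\Im z>0\}$. Let $\mathbf D_{\mathbf F}\subset\mathbb R^2$ be the set of pairs $(y,\eta)$ for which such a root exists. Then the map sending $(y,\eta)\in\mathbf D_{\mathbf F}$ to this root is a diffeomorphism from $\mathbf D_{\mathbf F}$ onto $\mathbb H$.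
   Context: Hypotheses: for each $N$, $\omega(N)=(\alpha^\pm(N),\beta^\pm(N),\gamma^\pm(N))$ with $\alpha^\pm_1\ge\alpha^\pm_2\ge\dots\ge0$, $\beta^\pm_1\ge\dots\ge0$, $\gamma^\pm\ge0$, $\beta^+_1+\beta^-_1\le1$; only finitely many parameters are nonzero, the $\alpha^\pm_i(N)$ are uniformly bounded, and $\frac1N\sum_{i:\alpha_i^\pm(N)>0}\delta(\alpha_i^\pm(N))\to\mathcal A^\pm$, $\frac1N\sum_{i:\beta_i^\pm(N)>0}\delta(\beta_i^\pm(N))\to\mathcal B^\pm$ weakly (finite compactly supported limit measures), and $\gamma^\pm(N)/N\to\Gamma^\pm>0$. With $C_\mu(z)=\int\frac{d\mu(x)}{z-x}$, $\mathbf F_{\mathbf J}(1+t)=\frac{C_{\mathcal A^+}(1/t)}{t^2}-\frac{\mathcal A^+(\mathbb R)}t+\frac{C_{\mathcal B^+}(-1/t)}{t^2}+\frac{\mathcal B^+(\mathbb R)}t-\frac{C_{\mathcal A^-}(-\frac{1+t}t)}{t^2}-\frac{\mathcal A^-(\mathbb R)}{t(1+t)}-\frac{C_{\mathcal B^-}(\frac{1+t}t)}{t^2}+\frac{\mathcal B^-(\mathbb R)}{t(1+t)}+\Gamma^+-\frac{\Gamma^-}{(1+t)^2}$. *)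

theory Defs
  imports "HOL-Analysis.Analysis"
begin

text \<open>Extreme character parameters omega(N) for a fixed N.  Sequences are indexed from 0,
  so a 0 is alpha_1 of the paper, etc.\<close>
definition extreme_char_params ::
  "(nat \<Rightarrow> real) \<Rightarrow> (nat \<Rightarrow> real) \<Rightarrow> (nat \<Rightarrow> real) \<Rightarrow> (nat \<Rightarrow> real) \<Rightarrow> real \<Rightarrow> real \<Rightarrow> bool" where
  "extreme_char_params ap am bp bm gp gm \<longleftrightarrow>
     (\<forall>i. ap i \<ge> ap (Suc i) \<and> am i \<ge> am (Suc i) \<and> bp i \<ge> bp (Suc i) \<and> bm i \<ge> bm (Suc i)) \<and>
     (\<forall>i. ap i \<ge> 0 \<and> am i \<ge> 0 \<and> bp i \<ge> 0 \<and> bm i \<ge> 0) \<and>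
     gp \<ge> 0 \<and> gm \<ge> 0 \<and> bp 0 + bm 0 \<le> 1 \<and>
     finite {i. ap i \<noteq> 0} \<and> finite {i. am i \<noteq> 0} \<and>
     finite {i. bp i \<noteq> 0} \<and> finite {i. bm i \<noteq> 0}"

definition fin_cpt_measure :: "real measure \<Rightarrow> bool" where
  "fin_cpt_measure \<mu> \<longleftrightarrow> sets \<mu> = sets borel \<and> finite_measure \<mu> \<and>
     (\<exists>K. compact K \<and> emeasure \<mu> (UNIV - K) = 0)"

definition empirical_weak_conv :: "(nat \<Rightarrow> nat \<Rightarrow> real) \<Rightarrow> real measure \<Rightarrow> bool" where
  "empirical_weak_conv a \<mu> \<longleftrightarrow>
     (\<forall>f::real \<Rightarrow> real. continuous_on UNIV f \<and> bounded (range f) \<longrightarrow>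
        ((\<lambda>N. (\<Sum>i\<in>{i. a N i > 0}. f (a N i)) / real N) \<longlongrightarrow> integral\<^sup>L \<mu> f) sequentially)"

definition cauchy_transform :: "real measure \<Rightarrow> complex \<Rightarrow> complex" where
  "cauchy_transform \<mu> z = integral\<^sup>L \<mu> (\<lambda>x. 1 / (z - complex_of_real x))"

definition total_mass :: "real measure \<Rightarrow> complex" where
  "total_mass \<mu> = complex_of_real (measure \<mu> UNIV)"

text \<open>F_shift ... t = F_J(1 + t), the formula of the paper.\<close>
definition F_shift ::
  "real measure \<Rightarrow> real measure \<Rightarrow> real measure \<Rightarrow> real measure \<Rightarrow> real \<Rightarrow> real \<Rightarrow> complex \<Rightarrow> complex" where
  "F_shift Ap Am Bp Bm Gp Gm t =
       cauchy_transform Ap (1 / t) / t^2 - total_mass Ap / t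
     + cauchy_transform Bp (- 1 / t) / t^2 + total_mass Bp / t
     - cauchy_transform Am (- ((1 + t) / t)) / t^2 - total_mass Am / (t * (1 + t))
     - cauchy_transform Bm ((1 + t) / t) / t^2 + total_mass Bm / (t * (1 + t))
     + complex_of_real Gp - complex_of_real Gm / (1 + t)^2"

fun iter_dderiv :: "('a::real_normed_vector \<Rightarrow> 'b::real_normed_vector) \<Rightarrow> 'a list \<Rightarrow> 'a \<Rightarrow> 'b" where
  "iter_dderiv f [] = f"
| "iter_dderiv f (v # vs) = (\<lambda>x. frechet_derivative (iter_dderiv f vs) (at x) v)"

definition smooth_on :: "'a::real_normed_vector set \<Rightarrow> ('a \<Rightarrow> 'b::real_normed_vector) \<Rightarrow> bool" where
  "smooth_on S f \<longleftrightarrow> (\<forall>vs. \<forall>x\<in>S. iter_dderiv f vs differentiable (at x))"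

definition diffeomorphism_on ::
  "'a::real_normed_vector set \<Rightarrow> 'b::real_normed_vector set \<Rightarrow> ('a \<Rightarrow> 'b) \<Rightarrow> bool" where
  "diffeomorphism_on S T f \<longleftrightarrow> open S \<and> open T \<and> bij_betw f S T \<and>
     smooth_on S f \<and> smooth_on T (inv_into S f)"

end

theory Submission
  imports Defs "HOL-Homology.Invariance_of_Domain" "HOL-Complex_Analysis.Complex_Analysis"
begin

text \<open>
  Write \<open>G z = (1 + z) F(1 + z)\<close>.  Expanding the Cauchy transforms, \<open>G\<close> is \<open>\<Gamma>\<^sup>+ (z + 1)\<close> plus a
  superposition, against the measures of \<open>J\<close> and a point mass \<open>\<Gamma>\<^sup>-\<close>, of linear fractional maps
  \<open>(a z + b) / (1 + g z)\<close> with real coefficients and \<open>a - b g \<ge> 0\<close>.  Each such map has a positive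
  semidefinite Pick kernel \<open>(f z - cnj (f w)) / (z - cnj w)\<close>, while the kernel of \<open>\<Gamma>\<^sup>+ z\<close> is the
  constant \<open>\<Gamma>\<^sup>+\<close>.

  Taking imaginary parts, \<open>z \<in> \<H>\<close> solves the equation for \<open>(y, \<eta>)\<close> iff \<open>\<eta> = Im (G z) |z|\<^sup>2 / Im z\<close>
  and \<open>y = \<eta> (1/z + 1) + G z\<close>, so the roots are the fibres of a map \<open>root_param : \<H> \<rightarrow> \<real>\<^sup>2\<close>.  If
  two points have the same image \<open>(y, \<eta>)\<close>, then \<open>G = (y - \<eta>) - \<eta>/z\<close> at both; the Pick kernel of
  this function is \<open>\<eta> / (z cnj w)\<close>, whose quadratic form vanishes at the vector \<open>(z\<^sub>1, -z\<^sub>2)\<close>, while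
  for \<open>G\<close> it is at least \<open>\<Gamma>\<^sup>+ |z\<^sub>1 - z\<^sub>2|\<^sup>2\<close>.  Hence \<open>root_param\<close> is injective, and the confluent
  version of the argument shows that its differential is injective.  Invariance of domain and the
  inverse function theorem make it a diffeomorphism onto its open image; smoothness holds because
  everything is built from holomorphic functions and their conjugates.
\<close>

abbreviation UHP :: "complex set" where "UHP \<equiv> {z. Im z > 0}"

lemma sub_cnj_nonzero:
  assumes "Im z > 0" "Im w > 0"
  shows "z - cnj w \<noteq> 0"
proof
  assume "z - cnj w = 0"
  then have "Im (z - cnj w) = 0" by simp
  with assms show False by simp
qed

lemma one_plus_nonzero:
  assumes "Im t > 0"
  shows "1 + t \<noteq> 0"
proof
  assume "1 + t = 0"
  then have "Im (1 + t) = 0" by simp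
  with assms show False by simp
qed


section \<open>Linear fractional maps with real coefficients\<close>

definition lfrac :: "real \<Rightarrow> real \<Rightarrow> real \<Rightarrow> complex \<Rightarrow> complex" where
  "lfrac a b g z = (of_real a * z + of_real b) / (1 + of_real g * z)"

definition lfrac_deriv :: "real \<Rightarrow> real \<Rightarrow> real \<Rightarrow> complex \<Rightarrow> complex" where
  "lfrac_deriv a b g z = of_real (a - b * g) / (1 + of_real g * z)^2"

lemma lfrac_denom_nonzero: "Im z \<noteq> 0 \<Longrightarrow> 1 + complex_of_real g * z \<noteq> 0"
proof
  assume "Im z \<noteq> 0" "1 + complex_of_real g * z = 0"
  then have "Im (1 + complex_of_real g * z) = 0" "Re (1 + complex_of_real g * z) = 0" by simp_all
  then show False using \<open>Im z \<noteq> 0\<close> by (cases "g = 0") auto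
qed

lemma cnj_lfrac: "cnj (lfrac a b g z) = lfrac a b g (cnj z)"
  unfolding lfrac_def by simp

lemma lfrac_diff:
  assumes "Im z \<noteq> 0" "Im w \<noteq> 0"
  shows "lfrac a b g z - lfrac a b g w
       = of_real (a - b * g) * (z - w) / ((1 + of_real g * z) * (1 + of_real g * w))"
  using lfrac_denom_nonzero[OF assms(1)] lfrac_denom_nonzero[OF assms(2)]
  unfolding lfrac_def by (simp add: field_simps)

definition pick_quotient :: "complex \<Rightarrow> complex \<Rightarrow> complex \<Rightarrow> complex \<Rightarrow> complex" where
  "pick_quotient z w fz fw = (fz - cnj fw) / (z - cnj w)"

lemma pick_quotient_lfrac:
  assumes "Im z > 0" "Im w > 0"
  shows "pick_quotient z w (lfrac a b g z) (lfrac a b g w)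
       = of_real (a - b * g) * (1 / (1 + of_real g * z)) * cnj (1 / (1 + of_real g * w))"
proof -
  have "lfrac a b g z - cnj (lfrac a b g w)
      = of_real (a - b * g) * (z - cnj w) / ((1 + of_real g * z) * (1 + of_real g * cnj w))"
    using lfrac_diff[of z "cnj w" a b g] assms by (simp add: cnj_lfrac)
  then show ?thesis using sub_cnj_nonzero[OF assms] by (simp add: pick_quotient_def)
qed

lemma Im_lfrac:
  assumes "Im z > 0"
  shows "Im (lfrac a b g z) = (a - b * g) * Im z * (cmod (1 / (1 + of_real g * z)))^2"
proof -
  define u where "u = 1 / (1 + complex_of_real g * z)"
  have "lfrac a b g z - cnj (lfrac a b g z) = of_real (a - b * g) * (u * cnj u) * (z - cnj z)"
    using pick_quotient_lfrac[OF assms assms, of a b g] sub_cnj_nonzero[OF assms assms]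
    by (simp add: u_def pick_quotient_def field_simps)
  also have "u * cnj u = of_real ((cmod u)^2)" by (simp only: complex_norm_square)
  finally have "Im (lfrac a b g z - cnj (lfrac a b g z))
      = Im (of_real (a - b * g) * of_real ((cmod u)^2) * (z - cnj z))"
    by simp
  then show ?thesis by (simp add: u_def)
qed

lemma has_field_derivative_lfrac:
  assumes "Im z \<noteq> 0"
  shows "(lfrac a b g has_field_derivative lfrac_deriv a b g z) (at z)"
proof -
  have "((\<lambda>z. (of_real a * z + of_real b) / (1 + of_real g * z)) has_field_derivative
      (of_real a * (1 + of_real g * z) - (of_real a * z + of_real b) * of_real g)
        / ((1 + of_real g * z) * (1 + of_real g * z))) (at z)"
    using lfrac_denom_nonzero[OF assms] by (auto intro!: derivative_eq_intros)
  moreover have "(of_real a * (1 + of_real g * z) - (of_real a * z + of_real b) * of_real g)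
        / ((1 + of_real g * z) * (1 + of_real g * z)) = lfrac_deriv a b g z"
    unfolding lfrac_deriv_def by (simp add: power2_eq_square algebra_simps)
  ultimately show ?thesis by (simp add: lfrac_def[abs_def])
qed

lemma lfrac_diff_quotient_error:
  assumes "Im w \<noteq> 0" "Im z \<noteq> 0" "w \<noteq> z"
  shows "(lfrac a b g w - lfrac a b g z) / (w - z) - lfrac_deriv a b g z
       = - (w - z) * of_real (a - b * g) * of_real g / ((1 + of_real g * w) * (1 + of_real g * z)^2)"
proof -
  define A where "A = 1 + complex_of_real g * w"
  define C where "C = 1 + complex_of_real g * z"
  define k where "k = complex_of_real (a - b * g)"
  have nz: "A \<noteq> 0" "C \<noteq> 0" "w - z \<noteq> 0"
    using lfrac_denom_nonzero assms by (auto simp: A_def C_def)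
  have CA: "C - A = - of_real g * (w - z)" by (simp add: A_def C_def algebra_simps)
  have "(k * (w - z) / (A * C)) / (w - z) - k / C^2 = k * (C - A) / (A * C^2)"
    using nz by (simp add: field_simps power2_eq_square)
  then show ?thesis
    unfolding lfrac_diff[OF assms(1,2)] lfrac_deriv_def A_def[symmetric] C_def[symmetric]
      k_def[symmetric] CA
    using nz by (simp add: field_simps)
qed

lemma norm_inverse_lfrac_denom_le:
  assumes "Im s > 0"
  shows "norm (1 / (1 + complex_of_real g * s)) \<le> cmod s / Im s"
proof -
  have "Im s = \<bar>Im (cnj s * (1 + complex_of_real g * s))\<bar>" using assms by (simp add: algebra_simps)
  also have "\<dots> \<le> cmod (cnj s * (1 + complex_of_real g * s))" by (rule abs_Im_le_cmod)
  also have "\<dots> = cmod s * cmod (1 + complex_of_real g * s)" by (simp add: norm_mult)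
  finally have "Im s \<le> cmod s * cmod (1 + complex_of_real g * s)" .
  moreover have "cmod (1 + complex_of_real g * s) > 0" using lfrac_denom_nonzero[of s g] assms by auto
  ultimately show ?thesis using assms by (simp add: norm_divide field_simps)
qed

lemma abs_lfrac_coeff_le:
  fixes a b g Bd :: real
  assumes "\<bar>a\<bar> \<le> Bd" "\<bar>b\<bar> \<le> Bd" "\<bar>g\<bar> \<le> Bd"
  shows "\<bar>a - b * g\<bar> \<le> Bd + Bd * Bd"
proof -
  have "\<bar>a - b * g\<bar> \<le> \<bar>a\<bar> + \<bar>b\<bar> * \<bar>g\<bar>" by (simp add: abs_mult order_trans[OF abs_triangle_ineq4])
  also have "\<dots> \<le> Bd + Bd * Bd" using assms by (intro add_mono mult_mono) auto
  finally show ?thesis .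
qed

lemma norm_lfrac_le:
  assumes "Im s > 0" "\<bar>a\<bar> \<le> Bd" "\<bar>b\<bar> \<le> Bd"
  shows "norm (lfrac a b g s) \<le> (Bd * cmod s + Bd) * (cmod s / Im s)"
proof -
  have "norm (lfrac a b g s) = norm (of_real a * s + of_real b) * norm (1 / (1 + complex_of_real g * s))"
    unfolding lfrac_def by (simp add: norm_divide)
  also have "\<dots> \<le> (Bd * cmod s + Bd) * (cmod s / Im s)"
  proof (rule mult_mono)
    have "norm (of_real a * s + of_real b) \<le> \<bar>a\<bar> * cmod s + \<bar>b\<bar>"
      by (metis norm_mult norm_of_real norm_triangle_le order_refl)
    also have "\<dots> \<le> Bd * cmod s + Bd" using assms by (simp add: mult_right_mono add_mono)
    finally show "norm (of_real a * s + of_real b) \<le> Bd * cmod s + Bd" .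
  qed (use norm_inverse_lfrac_denom_le assms in auto)
  finally show ?thesis .
qed

lemma norm_lfrac_deriv_le:
  assumes "Im z > 0" "\<bar>a\<bar> \<le> Bd" "\<bar>b\<bar> \<le> Bd" "\<bar>g\<bar> \<le> Bd"
  shows "norm (lfrac_deriv a b g z) \<le> (Bd + Bd * Bd) * (cmod z / Im z)^2"
proof -
  have "norm (lfrac_deriv a b g z) = \<bar>a - b * g\<bar> * (norm (1 / (1 + complex_of_real g * z)))^2"
    unfolding lfrac_deriv_def
    by (simp add: divide_inverse norm_mult norm_inverse norm_power power_inverse
        del: of_real_diff of_real_mult)
  also have "\<dots> \<le> (Bd + Bd * Bd) * (cmod z / Im z)^2"
    using abs_lfrac_coeff_le[OF assms(2-4)] norm_inverse_lfrac_denom_le[OF assms(1)]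
    by (intro mult_mono power_mono) auto
  finally show ?thesis .
qed

lemma norm_lfrac_diff_quotient_error_le:
  assumes "Im w > 0" "Im z > 0" "w \<noteq> z" "\<bar>a\<bar> \<le> Bd" "\<bar>b\<bar> \<le> Bd" "\<bar>g\<bar> \<le> Bd"
  shows "norm ((lfrac a b g w - lfrac a b g z) / (w - z) - lfrac_deriv a b g z)
       \<le> cmod (w - z) * ((Bd + Bd * Bd) * Bd) * (cmod w / Im w) * (cmod z / Im z)^2"
proof -
  have "norm ((lfrac a b g w - lfrac a b g z) / (w - z) - lfrac_deriv a b g z)
      = cmod (w - z) * (\<bar>a - b * g\<bar> * \<bar>g\<bar>) * norm (1 / (1 + complex_of_real g * w))
          * (norm (1 / (1 + complex_of_real g * z)))^2"
    using assms(1-3)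
    by (simp add: lfrac_diff_quotient_error norm_divide norm_mult norm_power power_one_over
        norm_minus_commute flip: of_real_diff of_real_mult)
  also have "\<dots> \<le> cmod (w - z) * ((Bd + Bd * Bd) * Bd) * (cmod w / Im w) * (cmod z / Im z)^2"
    using abs_lfrac_coeff_le[OF assms(4-6)] assms(1,6) norm_inverse_lfrac_denom_le[OF assms(1), of g]
      norm_inverse_lfrac_denom_le[OF assms(2), of g]
    by (intro mult_mono power_mono) auto
  finally show ?thesis .
qed


section \<open>Pick forms\<close>

text \<open>
  \<open>pick_form\<close> is the quadratic form of the Pick matrix of the values \<open>w\<^sub>i\<close> at the points \<open>z\<^sub>i\<close>,
  evaluated at the vector \<open>(z\<^sub>1, -z\<^sub>2)\<close>.  \<open>pick_form_confluent z w d\<close> is its limit, divided by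
  \<open>|z\<^sub>1 - z\<^sub>2|\<^sup>2\<close>, as \<open>z\<^sub>2 \<rightarrow> z\<^sub>1 = z\<close>, for the value \<open>w\<close> and the derivative \<open>d\<close> at \<open>z\<close>.
\<close>

definition pick_form :: "complex \<Rightarrow> complex \<Rightarrow> complex \<Rightarrow> complex \<Rightarrow> real" where
  "pick_form z1 z2 w1 w2 = Re (z1 * cnj z1 * pick_quotient z1 z1 w1 w1
      + z2 * cnj z2 * pick_quotient z2 z2 w2 w2
      - z1 * cnj z2 * pick_quotient z1 z2 w1 w2 - z2 * cnj z1 * pick_quotient z2 z1 w2 w1)"

definition pick_form_confluent :: "complex \<Rightarrow> complex \<Rightarrow> complex \<Rightarrow> real" where
  "pick_form_confluent z w d = Re ((w - cnj w) / (z - cnj z)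
      + z * (d / (z - cnj z) - (w - cnj w) / (z - cnj z)^2)
      + cnj z * (- cnj d / (z - cnj z) + (w - cnj w) / (z - cnj z)^2)
      + z * cnj z * ((d + cnj d) / (z - cnj z)^2 - 2 * (w - cnj w) / (z - cnj z)^3))"

lemma pick_form_add: "pick_form z1 z2 (w1 + v1) (w2 + v2) = pick_form z1 z2 w1 w2 + pick_form z1 z2 v1 v2"
  unfolding pick_form_def pick_quotient_def
  by (simp add: add_divide_distrib diff_divide_distrib distrib_left right_diff_distrib)

lemma pick_form_confluent_add:
  "pick_form_confluent z (w + v) (d + d') = pick_form_confluent z w d + pick_form_confluent z v d'"
  unfolding pick_form_confluent_def
  by (simp add: add_divide_distrib diff_divide_distrib distrib_left right_diff_distrib)

lemma pick_form_real_linear: "pick_form z1 z2 w1 w2 = Re (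
     (z1 * cnj z1 / (z1 - cnj z1) - z1 * cnj z2 / (z1 - cnj z2)) * w1
   + (z2 * cnj z1 / (z2 - cnj z1) - z1 * cnj z1 / (z1 - cnj z1)) * cnj w1
   + (z2 * cnj z2 / (z2 - cnj z2) - z2 * cnj z1 / (z2 - cnj z1)) * w2
   + (z1 * cnj z2 / (z1 - cnj z2) - z2 * cnj z2 / (z2 - cnj z2)) * cnj w2)"
  unfolding pick_form_def pick_quotient_def
  by (simp add: diff_divide_distrib right_diff_distrib left_diff_distrib)

lemma pick_form_confluent_real_linear: "pick_form_confluent z w d = Re (
     (1 / (z - cnj z) - z / (z - cnj z)^2 + cnj z / (z - cnj z)^2 - 2 * z * cnj z / (z - cnj z)^3) * w
   + (- (1 / (z - cnj z) - z / (z - cnj z)^2 + cnj z / (z - cnj z)^2 - 2 * z * cnj z / (z - cnj z)^3))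
       * cnj w
   + (z / (z - cnj z) + z * cnj z / (z - cnj z)^2) * d
   + (- cnj z / (z - cnj z) + z * cnj z / (z - cnj z)^2) * cnj d)"
  unfolding pick_form_confluent_def
  by (simp add: diff_divide_distrib add_divide_distrib right_diff_distrib left_diff_distrib
      distrib_left distrib_right mult_ac)

lemma pick_form_lfrac:
  assumes "Im z1 > 0" "Im z2 > 0"
  shows "pick_form z1 z2 (lfrac a b g z1) (lfrac a b g z2)
       = (a - b * g) * (cmod (z1 / (1 + of_real g * z1) - z2 / (1 + of_real g * z2)))^2"
proof -
  define u1 where "u1 = 1 / (1 + complex_of_real g * z1)"
  define u2 where "u2 = 1 / (1 + complex_of_real g * z2)"
  define k where "k = complex_of_real (a - b * g)"
  have "pick_form z1 z2 (lfrac a b g z1) (lfrac a b g z2)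
      = Re (z1 * cnj z1 * (k * u1 * cnj u1) + z2 * cnj z2 * (k * u2 * cnj u2)
          - z1 * cnj z2 * (k * u1 * cnj u2) - z2 * cnj z1 * (k * u2 * cnj u1))"
    unfolding pick_form_def u1_def u2_def k_def using pick_quotient_lfrac assms by simp
  also have "\<dots> = Re (k * ((z1 * u1 - z2 * u2) * cnj (z1 * u1 - z2 * u2)))"
    by (simp add: algebra_simps)
  also have "\<dots> = (a - b * g) * (cmod (z1 * u1 - z2 * u2))^2"
    by (simp only: k_def complex_norm_square[symmetric] Re_complex_of_real of_real_mult[symmetric])
  finally show ?thesis by (simp add: u1_def u2_def)
qed

lemma pick_form_affine_inverse:
  assumes "Im z1 > 0" "Im z2 > 0"
  shows "pick_form z1 z2 (of_real c - of_real \<eta> / z1) (of_real c - of_real \<eta> / z2) = 0"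
proof -
  have kernel: "pick_quotient z w (of_real c - of_real \<eta> / z) (of_real c - of_real \<eta> / w)
      = of_real \<eta> / (z * cnj w)" if "Im z > 0" "Im w > 0" for z w
  proof -
    have "z \<noteq> 0" "cnj w \<noteq> 0" "z - cnj w \<noteq> 0" using that sub_cnj_nonzero[OF that] by auto
    then show ?thesis by (simp add: pick_quotient_def field_simps)
  qed
  have "z1 \<noteq> 0" "z2 \<noteq> 0" using assms by auto
  then show ?thesis
    unfolding pick_form_def kernel[OF assms(1) assms(1)] kernel[OF assms(2) assms(2)]
      kernel[OF assms(1) assms(2)] kernel[OF assms(2) assms(1)]
    by simp
qed

lemma lfrac_confluent_identity:
  fixes z q g k :: complex
  assumes "z - q \<noteq> 0" "1 + g * z \<noteq> 0" "1 + g * q \<noteq> 0"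
  shows "(k * (z - q) / ((1 + g * z) * (1 + g * q))) / (z - q)
      + z * ((k / (1 + g * z)^2) / (z - q) - (k * (z - q) / ((1 + g * z) * (1 + g * q))) / (z - q)^2)
      + q * (- (k / (1 + g * q)^2) / (z - q) + (k * (z - q) / ((1 + g * z) * (1 + g * q))) / (z - q)^2)
      + z * q * (((k / (1 + g * z)^2) + (k / (1 + g * q)^2)) / (z - q)^2
                 - 2 * (k * (z - q) / ((1 + g * z) * (1 + g * q))) / (z - q)^3)
     = k / ((1 + g * z)^2 * (1 + g * q)^2)"
proof -
  define a where "a = 1 + g * z"
  define b where "b = 1 + g * q"
  define d where "d = z - q"
  have ba: "b - a = - g * d" unfolding a_def b_def d_def by (simp add: algebra_simps)
  have nz: "a \<noteq> 0" "b \<noteq> 0" "d \<noteq> 0" using assms by (auto simp: a_def b_def d_def)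
  have t1: "(k * d / (a * b)) / d = k / (a * b)" using nz by simp
  have t2: "z * ((k / a^2) / d - (k * d / (a * b)) / d^2) = - z * k * g / (a^2 * b)"
  proof -
    have "(k / a^2) / d - (k * d / (a * b)) / d^2 = k * (b - a) / (a^2 * b * d)"
      using nz by (simp add: field_simps power2_eq_square)
    also have "\<dots> = - k * g / (a^2 * b)" unfolding ba using nz by (simp add: field_simps power2_eq_square)
    finally show ?thesis by simp
  qed
  have t3: "q * (- (k / b^2) / d + (k * d / (a * b)) / d^2) = - q * k * g / (a * b^2)"
  proof -
    have "- (k / b^2) / d + (k * d / (a * b)) / d^2 = k * (b - a) / (a * b^2 * d)"
      using nz by (simp add: field_simps power2_eq_square)
    also have "\<dots> = - k * g / (a * b^2)" unfolding ba using nz by (simp add: field_simps power2_eq_square)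
    finally show ?thesis by simp
  qed
  have t4: "z * q * (((k / a^2) + (k / b^2)) / d^2 - 2 * (k * d / (a * b)) / d^3)
      = z * q * k * g^2 / (a^2 * b^2)"
  proof -
    have "((k / a^2) + (k / b^2)) / d^2 - 2 * (k * d / (a * b)) / d^3 = k * (b - a)^2 / (a^2 * b^2 * d^2)"
      using nz by (simp add: field_simps power2_eq_square power3_eq_cube)
    also have "\<dots> = k * g^2 / (a^2 * b^2)" unfolding ba using nz by (simp add: field_simps power2_eq_square)
    finally show ?thesis by simp
  qed
  have "k / (a * b) + - z * k * g / (a^2 * b) + - q * k * g / (a * b^2) + z * q * k * g^2 / (a^2 * b^2)
      = k * (a - z * g) * (b - q * g) / (a^2 * b^2)"
    using nz by (simp add: field_simps power2_eq_square)
  also have "\<dots> = k / (a^2 * b^2)" by (simp add: a_def b_def mult.commute)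
  finally show ?thesis using t1 t2 t3 t4
    unfolding a_def[symmetric] b_def[symmetric] d_def[symmetric] by simp
qed

lemma pick_form_confluent_lfrac:
  assumes "Im z > 0"
  shows "pick_form_confluent z (lfrac a b g z) (lfrac_deriv a b g z)
       = (a - b * g) / (cmod (1 + of_real g * z))^4"
proof -
  define k where "k = complex_of_real (a - b * g)"
  define A where "A = 1 + complex_of_real g * z"
  have A0: "A \<noteq> 0" "1 + complex_of_real g * cnj z \<noteq> 0"
    unfolding A_def using lfrac_denom_nonzero assms by auto
  have w: "lfrac a b g z - cnj (lfrac a b g z) = k * (z - cnj z) / (A * (1 + of_real g * cnj z))"
    unfolding cnj_lfrac k_def A_def by (rule lfrac_diff) (use assms in auto)
  have ld: "lfrac_deriv a b g z = k / A^2" by (simp add: lfrac_deriv_def k_def A_def)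
  have cd: "cnj (k / A^2) = k / (1 + of_real g * cnj z)^2" by (simp add: k_def A_def)
  have "pick_form_confluent z (lfrac a b g z) (lfrac_deriv a b g z)
      = Re (k / (A^2 * (1 + of_real g * cnj z)^2))"
    unfolding ld pick_form_confluent_def w cd
    using lfrac_confluent_identity[OF sub_cnj_nonzero[OF assms assms] A0[unfolded A_def], of k]
    by (simp add: A_def)
  also have "A^2 * (1 + of_real g * cnj z)^2 = of_real ((cmod A)^4)"
  proof -
    have "A^2 * (1 + of_real g * cnj z)^2 = (A * cnj A)^2" by (simp add: A_def power_mult_distrib)
    also have "\<dots> = of_real ((cmod A)^4)" by (simp add: complex_norm_square[symmetric])
    finally show ?thesis .
  qed
  finally show ?thesis by (simp add: k_def A_def del: of_real_power)
qed

lemma pick_form_confluent_affine_inverse: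
  assumes "Im z > 0"
  shows "pick_form_confluent z (of_real c - of_real \<eta> / z) (of_real \<eta> / z^2) = 0"
proof -
  define cz where "cz = cnj z"
  define d where "d = z - cz"
  define k where "k = complex_of_real \<eta>"
  have nz: "d \<noteq> 0" "cz \<noteq> 0" "z \<noteq> 0"
    using assms sub_cnj_nonzero[OF assms assms] by (auto simp: d_def cz_def)
  have dd: "cz - z = - d" by (simp add: d_def)
  have w: "of_real c - of_real \<eta> / z - cnj (of_real c - of_real \<eta> / z) = k * d / (z * cz)"
    using nz by (simp add: field_simps k_def d_def cz_def)
  have cd: "cnj (k / z^2) = k / cz^2" by (simp add: k_def cz_def)
  have t1: "(k * d / (z * cz)) / d = k / (z * cz)" using nz by simp
  have t2: "z * ((k / z^2) / d - (k * d / (z * cz)) / d^2) = - k / (z * cz)"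
  proof -
    have "(k / z^2) / d - (k * d / (z * cz)) / d^2 = k * (cz - z) / (z^2 * cz * d)"
      using nz by (simp add: field_simps power2_eq_square)
    then show ?thesis unfolding dd using nz by (simp add: field_simps power2_eq_square)
  qed
  have t3: "cz * (- (k / cz^2) / d + (k * d / (z * cz)) / d^2) = - k / (z * cz)"
  proof -
    have "- (k / cz^2) / d + (k * d / (z * cz)) / d^2 = k * (cz - z) / (z * cz^2 * d)"
      using nz by (simp add: field_simps power2_eq_square)
    then show ?thesis unfolding dd using nz by (simp add: field_simps power2_eq_square)
  qed
  have t4: "z * cz * ((k / z^2 + k / cz^2) / d^2 - 2 * (k * d / (z * cz)) / d^3) = k / (z * cz)"
  proof -
    have "(k / z^2 + k / cz^2) / d^2 - 2 * (k * d / (z * cz)) / d^3 = k * (cz - z)^2 / (z^2 * cz^2 * d^2)"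
      using nz by (simp add: field_simps power2_eq_square power3_eq_cube)
    then show ?thesis unfolding dd using nz by (simp add: field_simps power2_eq_square)
  qed
  have "pick_form_confluent z (of_real c - of_real \<eta> / z) (k / z^2)
      = Re (k / (z * cz) + - k / (z * cz) + - k / (z * cz) + k / (z * cz))"
    unfolding pick_form_confluent_def w cd cz_def[symmetric] d_def[symmetric] t1 t2 t3 t4 ..
  then show ?thesis by (simp add: k_def)
qed

lemma Re_integral_real_linear:
  fixes f g :: "'a \<Rightarrow> complex"
  assumes "integrable M f" "integrable M g"
  shows "Re (a * integral\<^sup>L M f + b * cnj (integral\<^sup>L M f) + c * integral\<^sup>L M g + d * cnj (integral\<^sup>L M g))
       = integral\<^sup>L M (\<lambda>x. Re (a * f x + b * cnj (f x) + c * g x + d * cnj (g x)))"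
proof -
  have eq: "integral\<^sup>L M (\<lambda>x. a * f x + b * cnj (f x) + c * g x + d * cnj (g x))
      = a * integral\<^sup>L M f + b * cnj (integral\<^sup>L M f) + c * integral\<^sup>L M g + d * cnj (integral\<^sup>L M g)"
    using assms by (simp add: integral_cnj[symmetric])
  have "integrable M (\<lambda>x. a * f x + b * cnj (f x) + c * g x + d * cnj (g x))"
    using assms by (intro Bochner_Integration.integrable_add integrable_mult_right integrable_cnj)
  then show ?thesis unfolding eq[symmetric] by (rule integral_Re[symmetric])
qed


section \<open>Mixtures of linear fractional maps\<close>

lemma norm_integral_le_measure:
  fixes f :: "'a \<Rightarrow> 'b::{banach,second_countable_topology}"
  assumes "finite_measure M" "integrable M f" "AE x in M. norm (f x) \<le> C"
  shows "norm (integral\<^sup>L M f) \<le> C * measure M (space M)"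
proof -
  have "norm (integral\<^sup>L M f) \<le> integral\<^sup>L M (\<lambda>x. norm (f x))" by (rule integral_norm_bound)
  also have "\<dots> \<le> integral\<^sup>L M (\<lambda>x. C)"
    by (rule integral_mono_AE) (use assms finite_measure.integrable_const in auto)
  also have "\<dots> = C * measure M (space M)" by simp
  finally show ?thesis .
qed

locale lfrac_mixture =
  fixes M :: "real measure" and a b g :: "real \<Rightarrow> real" and Bd :: real
  assumes finite_M: "finite_measure M"
    and measurable: "a \<in> borel_measurable M" "b \<in> borel_measurable M" "g \<in> borel_measurable M"
    and bounded: "AE x in M. \<bar>a x\<bar> \<le> Bd \<and> \<bar>b x\<bar> \<le> Bd \<and> \<bar>g x\<bar> \<le> Bd"
    and pick: "AE x in M. a x - b x * g x \<ge> 0"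
begin

definition mix :: "complex \<Rightarrow> complex" where
  "mix z = integral\<^sup>L M (\<lambda>x. lfrac (a x) (b x) (g x) z)"

definition mix_deriv :: "complex \<Rightarrow> complex" where
  "mix_deriv z = integral\<^sup>L M (\<lambda>x. lfrac_deriv (a x) (b x) (g x) z)"

lemma integrable_lfrac:
  assumes "Im z > 0"
  shows "integrable M (\<lambda>x. lfrac (a x) (b x) (g x) z)"
proof (rule finite_measure.integrable_const_bound[OF finite_M])
  show "(\<lambda>x. lfrac (a x) (b x) (g x) z) \<in> borel_measurable M"
    unfolding lfrac_def using measurable by measurable
  show "AE x in M. norm (lfrac (a x) (b x) (g x) z) \<le> (Bd * cmod z + Bd) * (cmod z / Im z)"
    using bounded by eventually_elim (use norm_lfrac_le assms in blast)
qed

lemma integrable_lfrac_deriv: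
  assumes "Im z > 0"
  shows "integrable M (\<lambda>x. lfrac_deriv (a x) (b x) (g x) z)"
proof (rule finite_measure.integrable_const_bound[OF finite_M])
  show "(\<lambda>x. lfrac_deriv (a x) (b x) (g x) z) \<in> borel_measurable M"
    unfolding lfrac_deriv_def using measurable by measurable
  show "AE x in M. norm (lfrac_deriv (a x) (b x) (g x) z) \<le> (Bd + Bd * Bd) * (cmod z / Im z)^2"
    using bounded by eventually_elim (use norm_lfrac_deriv_le assms in blast)
qed

lemma has_field_derivative_mix:
  assumes z: "Im z > 0"
  shows "(mix has_field_derivative mix_deriv z) (at z)"
proof -
  define K where "K w = cmod (w - z) * ((Bd + Bd * Bd) * Bd) * (cmod w / Im w) * (cmod z / Im z)^2
      * measure M (space M)" for w
  have bound: "norm ((mix w - mix z) / (w - z) - mix_deriv z) \<le> K w" if w: "Im w > 0" "w \<noteq> z" for w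
  proof -
    let ?q = "\<lambda>x. (lfrac (a x) (b x) (g x) w - lfrac (a x) (b x) (g x) z) / (w - z)
        - lfrac_deriv (a x) (b x) (g x) z"
    have int: "integrable M ?q"
      using integrable_lfrac integrable_lfrac_deriv z w
      by (intro Bochner_Integration.integrable_diff integrable_divide) auto
    have "(mix w - mix z) / (w - z) - mix_deriv z = integral\<^sup>L M ?q"
      using integrable_lfrac integrable_lfrac_deriv z w
      unfolding mix_def mix_deriv_def by simp
    also have "norm \<dots> \<le> K w" unfolding K_def
    proof (rule norm_integral_le_measure[OF finite_M int])
      show "AE x in M. norm (?q x)
          \<le> cmod (w - z) * ((Bd + Bd * Bd) * Bd) * (cmod w / Im w) * (cmod z / Im z)^2"
        using bounded by eventually_elim (use norm_lfrac_diff_quotient_error_le w z in blast)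
    qed
    finally show ?thesis .
  qed
  have "((\<lambda>w. (mix w - mix z) / (w - z) - mix_deriv z) \<longlongrightarrow> 0) (at z)"
  proof (rule Lim_null_comparison)
    show "\<forall>\<^sub>F w in at z. norm ((mix w - mix z) / (w - z) - mix_deriv z) \<le> K w"
    proof -
      have "\<forall>\<^sub>F w in at z. w \<in> UHP - {z}"
        by (rule eventually_at_in_open) (use z open_halfspace_Im_gt in auto)
      then show ?thesis by eventually_elim (use bound in auto)
    qed
    have "(K \<longlongrightarrow> K z) (at z)"
      unfolding K_def using z by (intro tendsto_intros) auto
    then show "(K \<longlongrightarrow> 0) (at z)" by (simp add: K_def)
  qed
  then show ?thesis by (simp add: has_field_derivative_iff Lim_null[symmetric])
qed

lemma Im_mix_nonneg:
  assumes "Im z > 0"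
  shows "Im (mix z) \<ge> 0"
proof -
  have "Im (mix z) = integral\<^sup>L M (\<lambda>x. Im (lfrac (a x) (b x) (g x) z))"
    unfolding mix_def by (rule integral_Im[symmetric]) (use integrable_lfrac assms in auto)
  also have "\<dots> \<ge> 0"
    by (rule integral_nonneg_AE)
      (use pick in \<open>eventually_elim, use assms in \<open>auto simp: Im_lfrac\<close>\<close>)
  finally show ?thesis .
qed

lemma pick_form_mix_nonneg:
  assumes "Im z1 > 0" "Im z2 > 0"
  shows "pick_form z1 z2 (mix z1) (mix z2) \<ge> 0"
proof -
  have "pick_form z1 z2 (mix z1) (mix z2)
      = integral\<^sup>L M (\<lambda>x. pick_form z1 z2 (lfrac (a x) (b x) (g x) z1) (lfrac (a x) (b x) (g x) z2))"
    unfolding pick_form_real_linear mix_def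
    by (rule Re_integral_real_linear) (use integrable_lfrac assms in auto)
  also have "\<dots> \<ge> 0"
    by (rule integral_nonneg_AE) (use pick in \<open>eventually_elim, simp add: pick_form_lfrac assms\<close>)
  finally show ?thesis .
qed

lemma pick_form_confluent_mix_nonneg:
  assumes "Im z > 0"
  shows "pick_form_confluent z (mix z) (mix_deriv z) \<ge> 0"
proof -
  have "pick_form_confluent z (mix z) (mix_deriv z)
      = integral\<^sup>L M (\<lambda>x. pick_form_confluent z (lfrac (a x) (b x) (g x) z) (lfrac_deriv (a x) (b x) (g x) z))"
    unfolding pick_form_confluent_real_linear mix_def mix_deriv_def
    by (rule Re_integral_real_linear) (use integrable_lfrac integrable_lfrac_deriv assms in auto)
  also have "\<dots> \<ge> 0"
    by (rule integral_nonneg_AE)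
      (use pick in \<open>eventually_elim, simp add: pick_form_confluent_lfrac assms\<close>)
  finally show ?thesis .
qed

end


section \<open>Smoothness of functions generated by holomorphic functions\<close>

text \<open>Closure under directional derivatives is what makes these functions smooth.\<close>

inductive holo_generated :: "complex set \<Rightarrow> (complex \<Rightarrow> complex) \<Rightarrow> bool" for S where
  holomorphic: "f holomorphic_on S \<Longrightarrow> holo_generated S f"
| cnj_holomorphic: "f holomorphic_on S \<Longrightarrow> holo_generated S (\<lambda>z. cnj (f z))"
| add: "holo_generated S f \<Longrightarrow> holo_generated S g \<Longrightarrow> holo_generated S (\<lambda>z. f z + g z)"
| mult: "holo_generated S f \<Longrightarrow> holo_generated S g \<Longrightarrow> holo_generated S (\<lambda>z. f z * g z)"
| inverse: "holo_generated S f \<Longrightarrow> (\<forall>z\<in>S. f z \<noteq> 0) \<Longrightarrow> holo_generated S (\<lambda>z. inverse (f z))"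

lemma holo_generated_const: "holo_generated S (\<lambda>z. c)"
  by (rule holo_generated.holomorphic) simp

lemma holo_generated_ident: "holo_generated S (\<lambda>z. z)"
  by (rule holo_generated.holomorphic) simp

lemma holo_generated_cnj: "holo_generated S f \<Longrightarrow> holo_generated S (\<lambda>z. cnj (f z))"
proof (induction rule: holo_generated.induct)
  case (holomorphic f) then show ?case by (rule holo_generated.cnj_holomorphic)
next
  case (cnj_holomorphic f) then show ?case by (simp add: holo_generated.holomorphic)
next
  case (add f g) then show ?case using holo_generated.add[OF add.IH] by simp
next
  case (mult f g) then show ?case using holo_generated.mult[OF mult.IH] by simp
next
  case (inverse f) then show ?case using holo_generated.inverse[OF inverse.IH] by simp
qed

lemma holo_generated_minus: "holo_generated S f \<Longrightarrow> holo_generated S (\<lambda>z. - f z)"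
  using holo_generated.mult[OF holo_generated_const[of S "-1"]] by simp

lemma holo_generated_diff:
  "holo_generated S f \<Longrightarrow> holo_generated S g \<Longrightarrow> holo_generated S (\<lambda>z. f z - g z)"
  using holo_generated.add[OF _ holo_generated_minus] by simp

lemma holo_generated_divide:
  "holo_generated S f \<Longrightarrow> holo_generated S g \<Longrightarrow> (\<forall>z\<in>S. g z \<noteq> 0)
    \<Longrightarrow> holo_generated S (\<lambda>z. f z / g z)"
  using holo_generated.mult[OF _ holo_generated.inverse] by (simp add: divide_inverse)

lemma holo_generated_Re: "holo_generated S f \<Longrightarrow> holo_generated S (\<lambda>z. of_real (Re (f z)))"
proof -
  assume "holo_generated S f"
  then have "holo_generated S (\<lambda>z. (f z + cnj (f z)) * (1/2))"
    by (intro holo_generated.mult holo_generated.add holo_generated_cnj holo_generated_const)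
  moreover have "(\<lambda>z. (f z + cnj (f z)) * (1/2)) = (\<lambda>z. of_real (Re (f z)))"
    by (auto simp: complex_add_cnj)
  ultimately show ?thesis by simp
qed

lemma holo_generated_Im: "holo_generated S f \<Longrightarrow> holo_generated S (\<lambda>z. of_real (Im (f z)))"
proof -
  assume "holo_generated S f"
  then have "holo_generated S (\<lambda>z. (f z - cnj (f z)) * (- \<i>/2))"
    by (intro holo_generated.mult holo_generated_diff holo_generated_cnj holo_generated_const)
  moreover have "(\<lambda>z. (f z - cnj (f z)) * (- \<i>/2)) = (\<lambda>z. of_real (Im (f z)))"
    by (auto simp: complex_diff_cnj)
  ultimately show ?thesis by simp
qed

lemma holo_generated_has_derivative:
  assumes S: "open S"
  shows "holo_generated S f \<Longrightarrow>
    \<exists>f'. (\<forall>v. holo_generated S (f' v)) \<and> (\<forall>z\<in>S. (f has_derivative (\<lambda>v. f' v z)) (at z))"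
proof (induction rule: holo_generated.induct)
  case (holomorphic f)
  have "\<forall>z\<in>S. (f has_derivative (\<lambda>v. deriv f z * v)) (at z)"
    using holomorphic_derivI[OF holomorphic S] by (auto simp: has_field_derivative_def)
  moreover have "\<forall>v. holo_generated S (\<lambda>z. deriv f z * v)"
    using holomorphic_deriv[OF holomorphic S]
    by (auto intro!: holo_generated.holomorphic holomorphic_intros)
  ultimately show ?case by (intro exI[of _ "\<lambda>v z. deriv f z * v"]) auto
next
  case (cnj_holomorphic f)
  have "\<forall>z\<in>S. ((\<lambda>z. cnj (f z)) has_derivative (\<lambda>v. cnj (deriv f z * v))) (at z)"
  proof
    fix z assume z: "z \<in> S"
    show "((\<lambda>z. cnj (f z)) has_derivative (\<lambda>v. cnj (deriv f z * v))) (at z)"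
      using has_derivative_cnj[OF holomorphic_derivI[OF cnj_holomorphic S z, of UNIV,
          unfolded has_field_derivative_def]]
      by (simp add: mult.commute)
  qed
  moreover have "\<forall>v. holo_generated S (\<lambda>z. cnj (deriv f z * v))"
    using holo_generated.cnj_holomorphic[OF holomorphic_on_mult[OF
        holomorphic_deriv[OF cnj_holomorphic S] holomorphic_on_const]]
    by blast
  ultimately show ?case by (intro exI[of _ "\<lambda>v z. cnj (deriv f z * v)"]) auto
next
  case (add f g)
  then obtain f' g' where
    f': "\<forall>v. holo_generated S (f' v)" "\<forall>z\<in>S. (f has_derivative (\<lambda>v. f' v z)) (at z)" and
    g': "\<forall>v. holo_generated S (g' v)" "\<forall>z\<in>S. (g has_derivative (\<lambda>v. g' v z)) (at z)"
    by blast
  show ?case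
    by (rule exI[of _ "\<lambda>v z. f' v z + g' v z"])
      (use f' g' in \<open>auto intro!: holo_generated.add has_derivative_add\<close>)
next
  case (mult f g)
  then obtain f' g' where
    f': "\<forall>v. holo_generated S (f' v)" "\<forall>z\<in>S. (f has_derivative (\<lambda>v. f' v z)) (at z)" and
    g': "\<forall>v. holo_generated S (g' v)" "\<forall>z\<in>S. (g has_derivative (\<lambda>v. g' v z)) (at z)"
    by blast
  have "\<forall>v. holo_generated S (\<lambda>z. f z * g' v z + f' v z * g z)"
    using mult.hyps f'(1) g'(1) by (simp add: holo_generated.add holo_generated.mult)
  moreover have "\<forall>z\<in>S. ((\<lambda>z. f z * g z) has_derivative (\<lambda>v. f z * g' v z + f' v z * g z)) (at z)"
    using has_derivative_mult f'(2) g'(2) by blast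
  ultimately show ?case by (intro exI[of _ "\<lambda>v z. f z * g' v z + f' v z * g z"] conjI) simp_all
next
  case (inverse f)
  then obtain f' where
    f': "\<forall>v. holo_generated S (f' v)" "\<forall>z\<in>S. (f has_derivative (\<lambda>v. f' v z)) (at z)"
    by blast
  have "\<forall>v. holo_generated S (\<lambda>z. - (inverse (f z) * f' v z * inverse (f z)))"
    using inverse.hyps f'(1)
    by (simp add: holo_generated_minus holo_generated.mult holo_generated.inverse)
  moreover have "\<forall>z\<in>S. ((\<lambda>z. inverse (f z)) has_derivative
      (\<lambda>v. - (inverse (f z) * f' v z * inverse (f z)))) (at z)"
    using Deriv.has_derivative_inverse f'(2) inverse.hyps(2) by blast
  ultimately show ?case
    by (intro exI[of _ "\<lambda>v z. - (inverse (f z) * f' v z * inverse (f z))"] conjI) simp_all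
qed

lemma frechet_derivative_cong_open:
  assumes "open S" "x \<in> S" "\<And>y. y \<in> S \<Longrightarrow> f y = g y"
  shows "frechet_derivative f (at x) = frechet_derivative g (at x)"
proof -
  have "(f has_derivative f') (at x) \<longleftrightarrow> (g has_derivative f') (at x)" for f'
    using has_derivative_transform_within_open[OF _ assms(1,2), of f _ UNIV g]
      has_derivative_transform_within_open[OF _ assms(1,2), of g _ UNIV f] assms(3) by auto
  then show ?thesis unfolding frechet_derivative_def by simp
qed

lemma smooth_on_derivative_closed_class:
  fixes P :: "('a::real_normed_vector \<Rightarrow> 'b::real_normed_vector) \<Rightarrow> bool"
  assumes S: "open S" and "P f"
    and closed: "\<And>h. P h \<Longrightarrow> (\<forall>x\<in>S. h differentiable (at x)) \<and>
                 (\<forall>v. \<exists>h'. P h' \<and> (\<forall>x\<in>S. frechet_derivative h (at x) v = h' x))"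
  shows "smooth_on S f"
proof -
  have iter: "\<exists>h. P h \<and> (\<forall>x\<in>S. iter_dderiv f vs x = h x)" for vs
  proof (induction vs)
    case Nil then show ?case using \<open>P f\<close> by auto
  next
    case (Cons v vs)
    then obtain h where h: "P h" "\<forall>x\<in>S. iter_dderiv f vs x = h x" by blast
    obtain h' where h': "P h'" "\<forall>x\<in>S. frechet_derivative h (at x) v = h' x"
      using closed[OF h(1)] by blast
    have "iter_dderiv f (v # vs) x = h' x" if x: "x \<in> S" for x
      using frechet_derivative_cong_open[OF S x, of "iter_dderiv f vs" h] h(2) h'(2) x by simp
    then show ?case using h' by blast
  qed
  show ?thesis unfolding smooth_on_def
  proof (intro allI ballI)
    fix vs x assume x: "x \<in> S"
    obtain h where h: "P h" "\<forall>x\<in>S. iter_dderiv f vs x = h x" using iter by blast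
    then obtain h' where "(h has_derivative h') (at x)"
      using closed x unfolding differentiable_def by blast
    then have "(iter_dderiv f vs has_derivative h') (at x)"
      by (rule has_derivative_transform_within_open[OF _ S x]) (use h in auto)
    then show "iter_dderiv f vs differentiable (at x)" unfolding differentiable_def by blast
  qed
qed

lemma smooth_on_Re_pair:
  assumes S: "open S" and "holo_generated S q1" "holo_generated S q2"
    and "\<forall>z\<in>S. f z = (Re (q1 z), Re (q2 z))"
  shows "smooth_on S f"
proof (rule smooth_on_derivative_closed_class[OF S,
      of "\<lambda>f. \<exists>q1 q2. holo_generated S q1 \<and> holo_generated S q2 \<and> (\<forall>z\<in>S. f z = (Re (q1 z), Re (q2 z)))"])
  show "\<exists>q1 q2. holo_generated S q1 \<and> holo_generated S q2 \<and> (\<forall>z\<in>S. f z = (Re (q1 z), Re (q2 z)))"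
    using assms by blast
next
  fix h
  assume "\<exists>q1 q2. holo_generated S q1 \<and> holo_generated S q2 \<and> (\<forall>z\<in>S. h z = (Re (q1 z), Re (q2 z)))"
  then obtain q1 q2 where q: "holo_generated S q1" "holo_generated S q2"
    and h: "\<forall>z\<in>S. h z = (Re (q1 z), Re (q2 z))" by blast
  obtain q1' where q1': "\<forall>v. holo_generated S (q1' v)"
      "\<forall>z\<in>S. (q1 has_derivative (\<lambda>v. q1' v z)) (at z)"
    using holo_generated_has_derivative[OF S q(1)] by blast
  obtain q2' where q2': "\<forall>v. holo_generated S (q2' v)"
      "\<forall>z\<in>S. (q2 has_derivative (\<lambda>v. q2' v z)) (at z)"
    using holo_generated_has_derivative[OF S q(2)] by blast
  have hd: "(h has_derivative (\<lambda>v. (Re (q1' v z), Re (q2' v z)))) (at z)" if z: "z \<in> S" for z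
  proof -
    have "((\<lambda>z. (Re (q1 z), Re (q2 z))) has_derivative (\<lambda>v. (Re (q1' v z), Re (q2' v z)))) (at z)"
      by (intro has_derivative_Pair has_derivative_Re) (use q1' q2' z in blast)+
    then show ?thesis
      by (rule has_derivative_transform_within_open[OF _ S z]) (use h in auto)
  qed
  have fd: "frechet_derivative h (at x) v = (Re (q1' v x), Re (q2' v x))" if "x \<in> S" for x v
    using frechet_derivative_at[OF hd[OF that]] by metis
  show "(\<forall>x\<in>S. h differentiable (at x)) \<and>
      (\<forall>v. \<exists>h'. (\<exists>q1 q2. holo_generated S q1 \<and> holo_generated S q2 \<and>
                         (\<forall>z\<in>S. h' z = (Re (q1 z), Re (q2 z)))) \<and>
                (\<forall>x\<in>S. frechet_derivative h (at x) v = h' x))"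
  proof (intro conjI allI ballI)
    fix x assume "x \<in> S" then show "h differentiable (at x)" using hd unfolding differentiable_def by blast
  next
    fix v
    show "\<exists>h'. (\<exists>q1 q2. holo_generated S q1 \<and> holo_generated S q2 \<and>
                   (\<forall>z\<in>S. h' z = (Re (q1 z), Re (q2 z)))) \<and>
              (\<forall>x\<in>S. frechet_derivative h (at x) v = h' x)"
      by (rule exI[of _ "\<lambda>z. (Re (q1' v z), Re (q2' v z))"], rule conjI,
          rule exI[of _ "q1' v"], rule exI[of _ "q2' v"]) (use q1'(1) q2'(1) fd in simp_all)
  qed
qed

lemma bounded_linear_complex_expansion:
  fixes L :: "complex \<Rightarrow> complex"
  assumes "bounded_linear L"
  shows "L u = of_real (Re u) * L 1 + of_real (Im u) * L \<i>"
proof -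
  interpret L: bounded_linear L by fact
  have "u = Re u *\<^sub>R 1 + Im u *\<^sub>R \<i>" by (simp add: complex_eq_iff)
  then have "L u = L (Re u *\<^sub>R 1 + Im u *\<^sub>R \<i>)" by simp
  also have "\<dots> = Re u *\<^sub>R L 1 + Im u *\<^sub>R L \<i>" by (simp add: L.add L.scaleR)
  finally show ?thesis by (simp add: scaleR_conv_of_real)
qed

lemma smooth_on_comp_holo_generated:
  fixes g :: "'a::real_normed_vector \<Rightarrow> complex"
  assumes D: "open D" and S: "open S" and gS: "\<forall>p\<in>D. g p \<in> S"
    and w: "\<forall>v. holo_generated S (w v)" and gd: "\<forall>p\<in>D. (g has_derivative (\<lambda>v. w v (g p))) (at p)"
    and q: "holo_generated S q" and h: "\<forall>p\<in>D. h p = q (g p)"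
  shows "smooth_on D h"
proof (rule smooth_on_derivative_closed_class[OF D,
      of "\<lambda>h. \<exists>q. holo_generated S q \<and> (\<forall>p\<in>D. h p = q (g p))"])
  show "\<exists>q. holo_generated S q \<and> (\<forall>p\<in>D. h p = q (g p))" using q h by blast
next
  fix h assume "\<exists>q. holo_generated S q \<and> (\<forall>p\<in>D. h p = q (g p))"
  then obtain q where q: "holo_generated S q" and h: "\<forall>p\<in>D. h p = q (g p)" by blast
  obtain q' where q': "\<forall>v. holo_generated S (q' v)" "\<forall>z\<in>S. (q has_derivative (\<lambda>v. q' v z)) (at z)"
    using holo_generated_has_derivative[OF S q] by blast
  have hd: "(h has_derivative (\<lambda>v. q' (w v (g p)) (g p))) (at p)" if p: "p \<in> D" for p
  proof -
    have "((\<lambda>p. q (g p)) has_derivative (\<lambda>v. q' (w v (g p)) (g p))) (at p)"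
      using has_derivative_compose[OF gd[rule_format, OF p] q'(2)[rule_format, OF gS[rule_format, OF p]]] .
    then show ?thesis
      by (rule has_derivative_transform_within_open[OF _ D p]) (use h in auto)
  qed
  have lin: "q' u z = of_real (Re u) * q' 1 z + of_real (Im u) * q' \<i> z" if "z \<in> S" for u z
    using bounded_linear_complex_expansion has_derivative_bounded_linear q'(2) that by blast
  show "(\<forall>x\<in>D. h differentiable (at x)) \<and>
        (\<forall>v. \<exists>h'. (\<exists>q. holo_generated S q \<and> (\<forall>p\<in>D. h' p = q (g p))) \<and>
                  (\<forall>x\<in>D. frechet_derivative h (at x) v = h' x))"
  proof (intro conjI allI ballI)
    fix x assume "x \<in> D" then show "h differentiable (at x)" using hd unfolding differentiable_def by blast
  next
    fix v
    define Q where "Q = (\<lambda>z. of_real (Re (w v z)) * q' 1 z + of_real (Im (w v z)) * q' \<i> z)"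
    have "holo_generated S Q" unfolding Q_def
      using w q'(1) by (intro holo_generated.add holo_generated.mult holo_generated_Re holo_generated_Im) auto
    moreover have "\<forall>p\<in>D. frechet_derivative h (at p) v = Q (g p)"
    proof
      fix p assume p: "p \<in> D"
      have "frechet_derivative h (at p) v = q' (w v (g p)) (g p)"
        using frechet_derivative_at[OF hd[OF p]] by metis
      also have "\<dots> = Q (g p)" unfolding Q_def using lin gS p by blast
      finally show "frechet_derivative h (at p) v = Q (g p)" .
    qed
    ultimately show "\<exists>h'. (\<exists>q. holo_generated S q \<and> (\<forall>p\<in>D. h' p = q (g p))) \<and>
        (\<forall>x\<in>D. frechet_derivative h (at x) v = h' x)"
      by (intro exI[of _ "\<lambda>p. Q (g p)"] conjI exI[of _ Q]) simp_all
  qed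
qed


section \<open>The function \<open>(1 + z) F(1 + z)\<close> as a mixture\<close>

lemma cauchy_transform_affine:
  assumes sets: "sets M = sets borel" and fin: "finite_measure M" and w: "Im w \<noteq> 0"
  shows "a * (cauchy_transform M w / b + total_mass M * c)
       = integral\<^sup>L M (\<lambda>x. a * (1 / (w - of_real x) / b + c))"
proof -
  have "(\<lambda>x::real. x) \<in> borel_measurable M" by (rule measurable_ident_sets[OF sets])
  then have meas: "(\<lambda>x. 1 / (w - complex_of_real x)) \<in> borel_measurable M" by measurable
  have "norm (1 / (w - complex_of_real x)) \<le> 1 / \<bar>Im w\<bar>" for x
  proof -
    have "\<bar>Im w\<bar> \<le> cmod (w - complex_of_real x)" using abs_Im_le_cmod[of "w - of_real x"] by simp
    then show ?thesis using w by (simp add: norm_divide frac_le)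
  qed
  then have int: "integrable M (\<lambda>x. 1 / (w - complex_of_real x) / b)"
    by (intro integrable_divide finite_measure.integrable_const_bound[OF fin _ meas]) auto
  have "integral\<^sup>L M (\<lambda>x. a * (1 / (w - of_real x) / b + c))
      = a * (integral\<^sup>L M (\<lambda>x. 1 / (w - of_real x)) / b + integral\<^sup>L M (\<lambda>x. c))"
    unfolding integral_mult_right_zero
      Bochner_Integration.integral_add[OF int finite_measure.integrable_const[OF fin]]
      integral_divide_zero ..
  also have "integral\<^sup>L M (\<lambda>x. c) = total_mass M * c"
    using sets_eq_imp_space_eq[OF sets] by (simp add: total_mass_def scaleR_conv_of_real)
  finally show ?thesis unfolding cauchy_transform_def by (rule sym)
qed

lemma lfrac_kernel_alpha_plus:
  assumes "Im t > 0"
  shows "(1 + t) * (1 / (1 / t - of_real x) / t^2 - 1 / t) = lfrac x x (-x) t"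
proof -
  define A where "A = 1 + complex_of_real (-x) * t"
  have nz: "t \<noteq> 0" "A \<noteq> 0"
    using assms lfrac_denom_nonzero[of t "-x"] unfolding A_def by auto
  have e: "1 / t - of_real x = A / t" using nz by (simp add: field_simps A_def)
  have "(1 + t) * (1 / (1 / t - of_real x) / t^2 - 1 / t) = (1 + t) * (1 - A) / (t * A)"
    unfolding e using nz by (simp add: field_simps power2_eq_square)
  also have "1 - A = of_real x * t" by (simp add: A_def)
  also have "(1 + t) * (of_real x * t) / (t * A) = (of_real x * t + of_real x) / A"
    using nz by (simp add: field_simps)
  finally show ?thesis unfolding lfrac_def A_def .
qed

lemma lfrac_kernel_beta_plus:
  assumes "Im t > 0"
  shows "(1 + t) * (1 / (- 1 / t - of_real x) / t^2 + 1 / t) = lfrac x x x t"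
proof -
  define A where "A = 1 + complex_of_real x * t"
  have nz: "t \<noteq> 0" "A \<noteq> 0"
    using assms lfrac_denom_nonzero[of t x] unfolding A_def by auto
  have e: "- 1 / t - of_real x = - A / t" using nz by (simp add: field_simps A_def)
  have "(1 + t) * (1 / (- 1 / t - of_real x) / t^2 + 1 / t) = (1 + t) * (A - 1) / (t * A)"
    unfolding e using nz by (simp add: field_simps power2_eq_square)
  also have "A - 1 = of_real x * t" by (simp add: A_def)
  also have "(1 + t) * (of_real x * t) / (t * A) = (of_real x * t + of_real x) / A"
    using nz by (simp add: field_simps)
  finally show ?thesis unfolding lfrac_def A_def .
qed

lemma lfrac_kernel_alpha_minus:
  assumes "Im t > 0"
  shows "(1 + t) * (- (1 / (- ((1 + t) / t) - of_real x) / t^2) - 1 / (t * (1 + t)))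
       = lfrac 0 (-x) (1 + x) t"
proof -
  define A where "A = 1 + complex_of_real (1 + x) * t"
  have nz: "t \<noteq> 0" "1 + t \<noteq> 0" "A \<noteq> 0"
    using assms lfrac_denom_nonzero[of t "1 + x"] one_plus_nonzero unfolding A_def by auto
  have e: "- ((1 + t) / t) - of_real x = - A / t" using nz by (simp add: field_simps A_def)
  have k: "1 / (- A / t) / t^2 = - (1 / (t * A))" using nz by (simp add: field_simps power2_eq_square)
  have "(1 + t) * (- (1 / (- ((1 + t) / t) - of_real x) / t^2) - 1 / (t * (1 + t)))
      = (1 + t) * (1 / (t * A)) - (1 + t) * (1 / (t * (1 + t)))"
    unfolding e k by (simp add: right_diff_distrib)
  also have "(1 + t) * (1 / (t * (1 + t))) = 1 / t" using nz by simp
  also have "(1 + t) * (1 / (t * A)) - 1 / t = (1 + t - A) / (t * A)" using nz by (simp add: field_simps)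
  also have "1 + t - A = - of_real x * t" by (simp add: A_def algebra_simps)
  also have "- of_real x * t / (t * A) = - of_real x / A" using nz by simp
  finally show ?thesis unfolding lfrac_def A_def by simp
qed

lemma lfrac_kernel_beta_minus:
  assumes "Im t > 0"
  shows "(1 + t) * (- (1 / ((1 + t) / t - of_real x) / t^2) + 1 / (t * (1 + t)))
       = lfrac 0 (-x) (1 - x) t"
proof -
  define A where "A = 1 + complex_of_real (1 - x) * t"
  have nz: "t \<noteq> 0" "1 + t \<noteq> 0" "A \<noteq> 0"
    using assms lfrac_denom_nonzero[of t "1 - x"] one_plus_nonzero unfolding A_def by auto
  have e: "(1 + t) / t - of_real x = A / t" using nz by (simp add: field_simps A_def)
  have k: "1 / (A / t) / t^2 = 1 / (t * A)" using nz by (simp add: field_simps power2_eq_square)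
  have "(1 + t) * (- (1 / ((1 + t) / t - of_real x) / t^2) + 1 / (t * (1 + t)))
      = (1 + t) * (1 / (t * (1 + t))) - (1 + t) * (1 / (t * A))"
    unfolding e k by (simp add: algebra_simps)
  also have "(1 + t) * (1 / (t * (1 + t))) = 1 / t" using nz by simp
  also have "1 / t - (1 + t) * (1 / (t * A)) = (A - 1 - t) / (t * A)" using nz by (simp add: field_simps)
  also have "A - 1 - t = - of_real x * t" by (simp add: A_def algebra_simps)
  also have "- of_real x * t / (t * A) = - of_real x / A" using nz by simp
  finally show ?thesis unfolding lfrac_def A_def by simp
qed

lemma F_shift_lfrac_decomposition:
  assumes "sets Ap = sets borel" "finite_measure Ap" "sets Am = sets borel" "finite_measure Am"
    and "sets Bp = sets borel" "finite_measure Bp" "sets Bm = sets borel" "finite_measure Bm"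
    and t: "Im t > 0"
  shows "(1 + t) * F_shift Ap Am Bp Bm Gp Gm t = lfrac Gp Gp 0 t + lfrac 0 (-Gm) 1 t
     + integral\<^sup>L Ap (\<lambda>x. lfrac x x (-x) t) + integral\<^sup>L Bp (\<lambda>x. lfrac x x x t)
     + integral\<^sup>L Am (\<lambda>x. lfrac 0 (-x) (1 + x) t) + integral\<^sup>L Bm (\<lambda>x. lfrac 0 (-x) (1 - x) t)"
proof -
  have nz: "t \<noteq> 0" "1 + t \<noteq> 0" using t one_plus_nonzero by auto
  have Im_nz: "Im (1 / t) \<noteq> 0" "Im (- 1 / t) \<noteq> 0" "Im (- ((1 + t) / t)) \<noteq> 0" "Im ((1 + t) / t) \<noteq> 0"
    using t nz by (simp_all add: Im_divide add_divide_distrib)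
  have expand: "(1 + t) * F_shift Ap Am Bp Bm Gp Gm t
    = (1 + t) * (cauchy_transform Ap (1 / t) / t^2 + total_mass Ap * (- 1 / t))
    + (1 + t) * (cauchy_transform Bp (- 1 / t) / t^2 + total_mass Bp * (1 / t))
    + (1 + t) * (cauchy_transform Am (- ((1 + t) / t)) / (- (t^2)) + total_mass Am * (- 1 / (t * (1 + t))))
    + (1 + t) * (cauchy_transform Bm ((1 + t) / t) / (- (t^2)) + total_mass Bm * (1 / (t * (1 + t))))
    + (1 + t) * complex_of_real Gp - (1 + t) * complex_of_real Gm / (1 + t)^2"
    unfolding F_shift_def by (simp add: algebra_simps)
  have "(1 + t) * (cauchy_transform Ap (1 / t) / t^2 + total_mass Ap * (- 1 / t))
      = integral\<^sup>L Ap (\<lambda>x. lfrac x x (-x) t)"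
    unfolding cauchy_transform_affine[OF assms(1,2) Im_nz(1)] using lfrac_kernel_alpha_plus[OF t] by simp
  moreover have "(1 + t) * (cauchy_transform Bp (- 1 / t) / t^2 + total_mass Bp * (1 / t))
      = integral\<^sup>L Bp (\<lambda>x. lfrac x x x t)"
    unfolding cauchy_transform_affine[OF assms(5,6) Im_nz(2)] using lfrac_kernel_beta_plus[OF t] by simp
  moreover have "(1 + t) * (cauchy_transform Am (- ((1 + t) / t)) / (- (t^2))
        + total_mass Am * (- 1 / (t * (1 + t)))) = integral\<^sup>L Am (\<lambda>x. lfrac 0 (-x) (1 + x) t)"
    unfolding cauchy_transform_affine[OF assms(3,4) Im_nz(3)] using lfrac_kernel_alpha_minus[OF t] by simp
  moreover have "(1 + t) * (cauchy_transform Bm ((1 + t) / t) / (- (t^2))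
        + total_mass Bm * (1 / (t * (1 + t)))) = integral\<^sup>L Bm (\<lambda>x. lfrac 0 (-x) (1 - x) t)"
    unfolding cauchy_transform_affine[OF assms(7,8) Im_nz(4)] using lfrac_kernel_beta_minus[OF t] by simp
  moreover have "(1 + t) * complex_of_real Gp = lfrac Gp Gp 0 t" by (simp add: lfrac_def algebra_simps)
  moreover have "(1 + t) * complex_of_real Gm / (1 + t)^2 = - lfrac 0 (-Gm) 1 t"
    using nz by (simp add: lfrac_def power2_eq_square)
  ultimately show ?thesis unfolding expand by (simp add: algebra_simps)
qed

lemma lfrac_mixture_on_interval:
  assumes "finite_measure M" "sets M = sets borel" "AE x in M. 0 \<le> x \<and> x \<le> c"
    and "a \<in> borel_measurable borel" "b \<in> borel_measurable borel" "g \<in> borel_measurable borel"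
    and "\<And>x. 0 \<le> x \<Longrightarrow> x \<le> c \<Longrightarrow>
      \<bar>a x\<bar> \<le> Bd \<and> \<bar>b x\<bar> \<le> Bd \<and> \<bar>g x\<bar> \<le> Bd \<and> a x - b x * g x \<ge> 0"
  shows "lfrac_mixture M a b g Bd"
proof (rule lfrac_mixture.intro)
  show "finite_measure M" by fact
  show "a \<in> borel_measurable M" "b \<in> borel_measurable M" "g \<in> borel_measurable M"
    using assms(2,4-6) measurable_cong_sets[OF assms(2) refl] by auto
  show "AE x in M. \<bar>a x\<bar> \<le> Bd \<and> \<bar>b x\<bar> \<le> Bd \<and> \<bar>g x\<bar> \<le> Bd"
    using assms(3) by eventually_elim (use assms(7) in blast)
  show "AE x in M. a x - b x * g x \<ge> 0"
    using assms(3) by eventually_elim (use assms(7) in blast)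
qed


section \<open>The root map\<close>

locale limit_parameters =
  fixes Ap Am Bp Bm :: "real measure" and Gp Gm C :: real
  assumes sets: "sets Ap = sets borel" "sets Am = sets borel" "sets Bp = sets borel" "sets Bm = sets borel"
    and finite: "finite_measure Ap" "finite_measure Am" "finite_measure Bp" "finite_measure Bm"
    and support_alpha: "AE x in Ap. 0 \<le> x \<and> x \<le> C" "AE x in Am. 0 \<le> x \<and> x \<le> C"
    and support_beta: "AE x in Bp. 0 \<le> x \<and> x \<le> 1" "AE x in Bm. 0 \<le> x \<and> x \<le> 1"
    and Gp_pos: "Gp > 0" and Gm_nonneg: "Gm \<ge> 0"
begin

sublocale alpha_plus: lfrac_mixture Ap "\<lambda>x. x" "\<lambda>x. x" "\<lambda>x. -x" "\<bar>C\<bar> + 2"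
  by (rule lfrac_mixture_on_interval[OF finite(1) sets(1) support_alpha(1)]) auto

sublocale beta_plus: lfrac_mixture Bp "\<lambda>x. x" "\<lambda>x. x" "\<lambda>x. x" "\<bar>C\<bar> + 2"
  by (rule lfrac_mixture_on_interval[OF finite(3) sets(3) support_beta(1)])
    (auto intro: mult_left_le_one_le)

sublocale alpha_minus: lfrac_mixture Am "\<lambda>x. 0" "\<lambda>x. -x" "\<lambda>x. 1 + x" "\<bar>C\<bar> + 2"
  by (rule lfrac_mixture_on_interval[OF finite(2) sets(2) support_alpha(2)]) auto

sublocale beta_minus: lfrac_mixture Bm "\<lambda>x. 0" "\<lambda>x. -x" "\<lambda>x. 1 - x" "\<bar>C\<bar> + 2"
  by (rule lfrac_mixture_on_interval[OF finite(4) sets(4) support_beta(2)]) auto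

definition G :: "complex \<Rightarrow> complex" where
  "G z = (1 + z) * F_shift Ap Am Bp Bm Gp Gm z"

definition G_deriv :: "complex \<Rightarrow> complex" where
  "G_deriv z = lfrac_deriv Gp Gp 0 z + lfrac_deriv 0 (-Gm) 1 z + alpha_plus.mix_deriv z
     + beta_plus.mix_deriv z + alpha_minus.mix_deriv z + beta_minus.mix_deriv z"

lemma G_eq_mixtures:
  assumes "Im z > 0"
  shows "G z = lfrac Gp Gp 0 z + lfrac 0 (-Gm) 1 z + alpha_plus.mix z + beta_plus.mix z
     + alpha_minus.mix z + beta_minus.mix z"
  unfolding G_def alpha_plus.mix_def beta_plus.mix_def alpha_minus.mix_def beta_minus.mix_def
  using F_shift_lfrac_decomposition[OF sets(1) finite(1) sets(2) finite(2) sets(3) finite(3)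
      sets(4) finite(4) assms]
  by (simp add: add_ac)

lemma has_field_derivative_G:
  assumes z: "Im z > 0"
  shows "(G has_field_derivative G_deriv z) (at z)"
proof -
  have "((\<lambda>z. lfrac Gp Gp 0 z + lfrac 0 (-Gm) 1 z + alpha_plus.mix z + beta_plus.mix z
      + alpha_minus.mix z + beta_minus.mix z) has_field_derivative G_deriv z) (at z)"
    unfolding G_deriv_def using z
    by (intro DERIV_add has_field_derivative_lfrac alpha_plus.has_field_derivative_mix
        beta_plus.has_field_derivative_mix alpha_minus.has_field_derivative_mix
        beta_minus.has_field_derivative_mix) auto
  then show ?thesis
    by (rule has_field_derivative_transform_within_open[OF _ open_halfspace_Im_gt])
      (use z G_eq_mixtures in auto)
qed

lemma G_holomorphic: "G holomorphic_on UHP"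
  using has_field_derivative_G holomorphic_on_open[OF open_halfspace_Im_gt] by auto

lemma Im_G_ge:
  assumes z: "Im z > 0"
  shows "Im (G z) \<ge> Gp * Im z"
proof -
  have "Im (lfrac Gp Gp 0 z) = Gp * Im z" using Im_lfrac[OF z] by simp
  moreover have "Im (lfrac 0 (-Gm) 1 z) \<ge> 0" using Im_lfrac[OF z, of 0 "-Gm" 1] Gm_nonneg z by simp
  moreover have "Im (alpha_plus.mix z) \<ge> 0" "Im (beta_plus.mix z) \<ge> 0"
      "Im (alpha_minus.mix z) \<ge> 0" "Im (beta_minus.mix z) \<ge> 0"
    using alpha_plus.Im_mix_nonneg beta_plus.Im_mix_nonneg alpha_minus.Im_mix_nonneg
      beta_minus.Im_mix_nonneg z by auto
  ultimately show ?thesis unfolding G_eq_mixtures[OF z] by simp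
qed

lemma pick_form_G_ge:
  assumes z: "Im z1 > 0" "Im z2 > 0"
  shows "pick_form z1 z2 (G z1) (G z2) \<ge> Gp * (cmod (z1 - z2))^2"
proof -
  have "pick_form z1 z2 (lfrac Gp Gp 0 z1) (lfrac Gp Gp 0 z2) = Gp * (cmod (z1 - z2))^2"
    using pick_form_lfrac[OF z] by simp
  moreover have "pick_form z1 z2 (lfrac 0 (-Gm) 1 z1) (lfrac 0 (-Gm) 1 z2) \<ge> 0"
    using pick_form_lfrac[OF z, of 0 "-Gm" 1] Gm_nonneg by simp
  moreover have "pick_form z1 z2 (alpha_plus.mix z1) (alpha_plus.mix z2) \<ge> 0"
      "pick_form z1 z2 (beta_plus.mix z1) (beta_plus.mix z2) \<ge> 0"
      "pick_form z1 z2 (alpha_minus.mix z1) (alpha_minus.mix z2) \<ge> 0"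
      "pick_form z1 z2 (beta_minus.mix z1) (beta_minus.mix z2) \<ge> 0"
    using alpha_plus.pick_form_mix_nonneg beta_plus.pick_form_mix_nonneg
      alpha_minus.pick_form_mix_nonneg beta_minus.pick_form_mix_nonneg z by auto
  ultimately show ?thesis unfolding G_eq_mixtures[OF z(1)] G_eq_mixtures[OF z(2)] pick_form_add by simp
qed

lemma pick_form_confluent_G_ge:
  assumes z: "Im z > 0"
  shows "pick_form_confluent z (G z) (G_deriv z) \<ge> Gp"
proof -
  have "pick_form_confluent z (lfrac Gp Gp 0 z) (lfrac_deriv Gp Gp 0 z) = Gp"
    using pick_form_confluent_lfrac[OF z, of Gp Gp 0] by simp
  moreover have "pick_form_confluent z (lfrac 0 (-Gm) 1 z) (lfrac_deriv 0 (-Gm) 1 z) \<ge> 0"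
    using pick_form_confluent_lfrac[OF z, of 0 "-Gm" 1] Gm_nonneg by simp
  moreover have "pick_form_confluent z (alpha_plus.mix z) (alpha_plus.mix_deriv z) \<ge> 0"
      "pick_form_confluent z (beta_plus.mix z) (beta_plus.mix_deriv z) \<ge> 0"
      "pick_form_confluent z (alpha_minus.mix z) (alpha_minus.mix_deriv z) \<ge> 0"
      "pick_form_confluent z (beta_minus.mix z) (beta_minus.mix_deriv z) \<ge> 0"
    using alpha_plus.pick_form_confluent_mix_nonneg beta_plus.pick_form_confluent_mix_nonneg
      alpha_minus.pick_form_confluent_mix_nonneg beta_minus.pick_form_confluent_mix_nonneg z by auto
  ultimately show ?thesis
    unfolding G_eq_mixtures[OF z] G_deriv_def pick_form_confluent_add by simp
qed

text \<open>\<open>y_of\<close> is real on \<open>\<H>\<close>: \<open>eta_of z\<close> is the unique \<open>\<eta>\<close> cancelling the imaginary part.\<close>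

definition eta_of :: "complex \<Rightarrow> real" where
  "eta_of z = Im (G z) * (cmod z)^2 / Im z"

definition y_of :: "complex \<Rightarrow> complex" where
  "y_of z = of_real (eta_of z) * (1 / z + 1) + G z"

definition root_param :: "complex \<Rightarrow> real \<times> real" where
  "root_param z = (Re (y_of z), eta_of z)"

lemma Im_one_div: "Im (1 / z) = - Im z / (cmod z)^2"
  by (simp add: Im_divide cmod_power2)

lemma eta_of_pos:
  assumes z: "Im z > 0"
  shows "eta_of z > 0"
proof -
  have "Im (G z) > 0" using Im_G_ge[OF z] Gp_pos z by (meson mult_pos_pos order_less_le_trans)
  moreover have "cmod z > 0" using z by auto
  ultimately show ?thesis unfolding eta_of_def using z by simp
qed

lemma y_of_real:
  assumes z: "Im z > 0"
  shows "y_of z = of_real (Re (y_of z))"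
proof -
  have "Im (y_of z) = eta_of z * (- Im z / (cmod z)^2) + Im (G z)"
    unfolding y_of_def by (simp add: Im_one_div)
  also have "\<dots> = 0" unfolding eta_of_def using z by (simp add: field_simps)
  finally show ?thesis by (simp add: complex_eq_iff)
qed

lemma G_eq_affine_inverse:
  assumes "Im z > 0"
  shows "G z = of_real (Re (y_of z) - eta_of z) - of_real (eta_of z) / z"
  using y_of_real[OF assms] unfolding y_of_def
  by (simp add: algebra_simps diff_divide_distrib)

lemma root_equation_iff:
  assumes z: "Im z > 0" and \<eta>: "\<eta> > 0"
  shows "1 / z + 1 + (1 + z) * F_shift Ap Am Bp Bm Gp Gm z / of_real \<eta> = of_real y / of_real \<eta>
     \<longleftrightarrow> root_param z = (y, \<eta>)"
proof -
  have "1 / z + 1 + (1 + z) * F_shift Ap Am Bp Bm Gp Gm z / of_real \<eta> = of_real y / of_real \<eta>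
      \<longleftrightarrow> of_real \<eta> * (1 / z + 1) + G z = of_real y"
    unfolding G_def[symmetric] using \<eta> by (simp add: field_simps)
  also have "\<dots> \<longleftrightarrow> root_param z = (y, \<eta>)"
  proof
    assume h: "of_real \<eta> * (1 / z + 1) + G z = of_real y"
    then have "Im (of_real \<eta> * (1 / z + 1) + G z) = 0" by simp
    then have "\<eta> * (- Im z / (cmod z)^2) + Im (G z) = 0" by (simp add: Im_one_div)
    then have "eta_of z = \<eta>" unfolding eta_of_def using z by (simp add: field_simps)
    then show "root_param z = (y, \<eta>)" using h by (simp add: root_param_def y_of_def)
  next
    assume "root_param z = (y, \<eta>)"
    then show "of_real \<eta> * (1 / z + 1) + G z = of_real y"
      using y_of_real[OF z] by (auto simp: root_param_def y_of_def)
  qed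
  finally show ?thesis .
qed

lemma inj_on_root_param: "inj_on root_param UHP"
proof (rule inj_onI)
  fix z1 z2 assume z: "z1 \<in> UHP" "z2 \<in> UHP" and eq: "root_param z1 = root_param z2"
  then have "G z1 = of_real (Re (y_of z1) - eta_of z1) - of_real (eta_of z1) / z1"
      "G z2 = of_real (Re (y_of z1) - eta_of z1) - of_real (eta_of z1) / z2"
    using G_eq_affine_inverse by (auto simp: root_param_def simp del: of_real_diff)
  then have "pick_form z1 z2 (G z1) (G z2) = 0"
    using pick_form_affine_inverse z by (simp del: of_real_diff)
  then have "Gp * (cmod (z1 - z2))^2 \<le> 0" using pick_form_G_ge z by fastforce
  then show "z1 = z2" using Gp_pos by (simp add: mult_le_0_iff)
qed

lemma holo_generated_G: "holo_generated UHP G"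
  by (rule holo_generated.holomorphic[OF G_holomorphic])

lemma holo_generated_eta_of: "holo_generated UHP (\<lambda>z. of_real (eta_of z))"
proof -
  have "of_real (eta_of z) = of_real (Im (G z)) * (z * cnj z) * inverse (of_real (Im z))" for z
  proof -
    have "of_real (eta_of z) = of_real (Im (G z)) * of_real ((cmod z)^2) * inverse (complex_of_real (Im z))"
      unfolding eta_of_def by (simp only: of_real_mult of_real_divide divide_inverse of_real_inverse)
    then show ?thesis by (simp only: complex_norm_square)
  qed
  then have "(\<lambda>z. of_real (eta_of z)) = (\<lambda>z. of_real (Im (G z)) * (z * cnj z) * inverse (of_real (Im z)))"
    by simp
  moreover have "holo_generated UHP (\<lambda>z. of_real (Im (G z)) * (z * cnj z) * inverse (of_real (Im z)))"
    by (intro holo_generated.mult holo_generated_Im holo_generated_G holo_generated_ident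
        holo_generated_cnj holo_generated.inverse) auto
  ultimately show ?thesis by simp
qed

lemma holo_generated_y_of: "holo_generated UHP y_of"
proof -
  have "y_of = (\<lambda>z. of_real (eta_of z) * (inverse z + 1) + G z)"
    by (simp add: fun_eq_iff y_of_def divide_inverse)
  moreover have "holo_generated UHP (\<lambda>z. of_real (eta_of z) * (inverse z + 1) + G z)"
    by (intro holo_generated.add holo_generated.mult holo_generated_eta_of holo_generated.inverse
        holo_generated_ident holo_generated_const holo_generated_G) auto
  ultimately show ?thesis by simp
qed

text \<open>Directional derivatives, chosen holo-generated so that the inverse differential is too.\<close>

definition dy :: "complex \<Rightarrow> complex \<Rightarrow> complex" where
  "dy = (SOME f'. (\<forall>v. holo_generated UHP (f' v)) \<and>
                  (\<forall>z\<in>UHP. (y_of has_derivative (\<lambda>v. f' v z)) (at z)))"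

definition deta :: "complex \<Rightarrow> complex \<Rightarrow> complex" where
  "deta = (SOME f'. (\<forall>v. holo_generated UHP (f' v)) \<and>
                    (\<forall>z\<in>UHP. ((\<lambda>z. of_real (eta_of z)) has_derivative (\<lambda>v. f' v z)) (at z)))"

lemma holo_generated_dy: "holo_generated UHP (dy v)"
  and has_derivative_y_of: "Im z > 0 \<Longrightarrow> (y_of has_derivative (\<lambda>v. dy v z)) (at z)"
  using someI_ex[OF holo_generated_has_derivative[OF open_halfspace_Im_gt holo_generated_y_of]]
  unfolding dy_def by auto

lemma holo_generated_deta: "holo_generated UHP (deta v)"
  and has_derivative_eta_of:
    "Im z > 0 \<Longrightarrow> ((\<lambda>z. of_real (eta_of z)) has_derivative (\<lambda>v. deta v z)) (at z)"
  using someI_ex[OF holo_generated_has_derivative[OF open_halfspace_Im_gt holo_generated_eta_of]]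
  unfolding deta_def by auto

lemma Im_dy:
  assumes z: "Im z > 0"
  shows "Im (dy u z) = 0"
proof -
  have "((\<lambda>z. Im (y_of z)) has_derivative (\<lambda>v. Im (dy v z))) (at z)"
    by (intro has_derivative_Im has_derivative_y_of z)
  moreover have "((\<lambda>z. Im (y_of z)) has_derivative (\<lambda>v. 0)) (at z)"
    by (rule has_derivative_transform_within_open[OF has_derivative_const open_halfspace_Im_gt])
      (use z y_of_real in \<open>auto simp: complex_eq_iff\<close>)
  ultimately have "(\<lambda>v. Im (dy v z)) = (\<lambda>v. 0)" by (rule has_derivative_unique)
  then show ?thesis by metis
qed

lemma Im_deta:
  assumes z: "Im z > 0"
  shows "Im (deta u z) = 0"
proof -
  have "((\<lambda>z. Im (of_real (eta_of z))) has_derivative (\<lambda>v. Im (deta v z))) (at z)"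
    by (intro has_derivative_Im has_derivative_eta_of z)
  then have "(\<lambda>v. Im (deta v z)) = (\<lambda>v. 0)" by (simp add: has_derivative_unique[OF _ has_derivative_const])
  then show ?thesis by metis
qed

lemma differential_root_param_injective:
  assumes z: "Im z > 0" and "Re (dy u z) = 0" "Re (deta u z) = 0"
  shows "u = 0"
proof (rule ccontr)
  assume u: "u \<noteq> 0"
  have z0: "z \<noteq> 0" using z by auto
  have zero: "dy u z = 0" "deta u z = 0" using assms Im_dy Im_deta by (simp_all add: complex_eq_iff)
  have "y_of = (\<lambda>z. of_real (eta_of z) * (inverse z + 1) + G z)"
    by (simp add: fun_eq_iff y_of_def divide_inverse)
  then have "(y_of has_derivative (\<lambda>v. of_real (eta_of z) * (- (inverse z * v * inverse z) + 0)
      + deta v z * (inverse z + 1) + G_deriv z * v)) (at z)"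
    using has_field_derivative_G[OF z] unfolding has_field_derivative_def
    by (simp only:) (intro has_derivative_add has_derivative_mult has_derivative_eta_of z Deriv.has_derivative_inverse
        has_derivative_ident has_derivative_const z0)
  then have "(\<lambda>v. dy v z) = (\<lambda>v. of_real (eta_of z) * (- (inverse z * v * inverse z) + 0)
      + deta v z * (inverse z + 1) + G_deriv z * v)"
    by (rule has_derivative_unique[OF has_derivative_y_of[OF z]])
  then have "dy u z = of_real (eta_of z) * (- (inverse z * u * inverse z) + 0)
      + deta u z * (inverse z + 1) + G_deriv z * u"
    by metis
  then have "0 = u * (G_deriv z - of_real (eta_of z) / z^2)"
    unfolding zero by (simp add: field_simps power2_eq_square)
  then have "G_deriv z = of_real (eta_of z) / z^2" using u by simp
  then have "pick_form_confluent z (G z) (G_deriv z) = 0"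
    unfolding G_eq_affine_inverse[OF z] by (rule ssubst) (rule pick_form_confluent_affine_inverse[OF z])
  then show False using pick_form_confluent_G_ge[OF z] Gp_pos by simp
qed

definition jac11 :: "complex \<Rightarrow> real" where "jac11 z = Re (dy 1 z)"
definition jac12 :: "complex \<Rightarrow> real" where "jac12 z = Re (dy \<i> z)"
definition jac21 :: "complex \<Rightarrow> real" where "jac21 z = Re (deta 1 z)"
definition jac22 :: "complex \<Rightarrow> real" where "jac22 z = Re (deta \<i> z)"
definition jac_det :: "complex \<Rightarrow> real" where "jac_det z = jac11 z * jac22 z - jac12 z * jac21 z"

lemma Re_dy_expansion:
  assumes "Im z > 0"
  shows "Re (dy u z) = Re u * jac11 z + Im u * jac12 z"
  using bounded_linear_complex_expansion[OF has_derivative_bounded_linear[OF has_derivative_y_of[OF assms]], of u]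
  by (simp add: jac11_def jac12_def)

lemma Re_deta_expansion:
  assumes "Im z > 0"
  shows "Re (deta u z) = Re u * jac21 z + Im u * jac22 z"
  using bounded_linear_complex_expansion[OF has_derivative_bounded_linear[OF has_derivative_eta_of[OF assms]], of u]
  by (simp add: jac21_def jac22_def)

lemma jac_det_nonzero:
  assumes z: "Im z > 0"
  shows "jac_det z \<noteq> 0"
proof
  assume det: "jac_det z = 0"
  have kernel: "u = 0" if "Re u * jac11 z + Im u * jac12 z = 0" "Re u * jac21 z + Im u * jac22 z = 0" for u
    using differential_root_param_injective[OF z] that Re_dy_expansion[OF z] Re_deta_expansion[OF z]
    by simp
  consider "jac11 z \<noteq> 0 \<or> jac12 z \<noteq> 0" | "jac21 z \<noteq> 0 \<or> jac22 z \<noteq> 0"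
    | "jac11 z = 0" "jac12 z = 0" "jac21 z = 0" "jac22 z = 0"
    by blast
  then show False
  proof cases
    case 1
    have "Complex (- jac12 z) (jac11 z) = 0"
      by (rule kernel) (use det in \<open>auto simp: jac_det_def algebra_simps\<close>)
    then show False using 1 by (simp add: complex_eq_iff)
  next
    case 2
    have "Complex (- jac22 z) (jac21 z) = 0"
      by (rule kernel) (use det in \<open>auto simp: jac_det_def algebra_simps\<close>)
    then show False using 2 by (simp add: complex_eq_iff)
  next
    case 3
    then have "(1::complex) = 0" by (intro kernel) auto
    then show False by simp
  qed
qed

lemma has_derivative_root_param:
  assumes "Im z > 0"
  shows "(root_param has_derivative (\<lambda>u. (Re (dy u z), Re (deta u z)))) (at z)"
proof -
  have "((\<lambda>z. (Re (y_of z), Re (of_real (eta_of z)))) has_derivative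
      (\<lambda>u. (Re (dy u z), Re (deta u z)))) (at z)"
    by (intro has_derivative_Pair has_derivative_Re has_derivative_y_of has_derivative_eta_of assms)
  then show ?thesis by (simp add: root_param_def[abs_def])
qed

definition inv_diff :: "real \<times> real \<Rightarrow> complex \<Rightarrow> complex" where
  "inv_diff v z = Complex ((fst v * jac22 z - snd v * jac12 z) / jac_det z)
                          ((snd v * jac11 z - fst v * jac21 z) / jac_det z)"

lemma inv_diff_inverse:
  assumes "Im z > 0"
  shows "(\<lambda>v. inv_diff v z) \<circ> (\<lambda>u. (Re (dy u z), Re (deta u z))) = id"
  using jac_det_nonzero[OF assms]
  by (simp add: fun_eq_iff Re_dy_expansion[OF assms] Re_deta_expansion[OF assms] inv_diff_def
      complex_eq_iff field_simps jac_det_def)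

lemma bounded_linear_inv_diff: "bounded_linear (\<lambda>v. inv_diff v z)"
proof -
  have "(\<lambda>v. inv_diff v z) = (\<lambda>v. fst v *\<^sub>R Complex (jac22 z / jac_det z) (- jac21 z / jac_det z)
      + snd v *\<^sub>R Complex (- jac12 z / jac_det z) (jac11 z / jac_det z))"
    by (auto simp: fun_eq_iff inv_diff_def complex_eq_iff diff_divide_distrib)
  then show ?thesis
    by (simp add: bounded_linear_add bounded_linear_compose[OF bounded_linear_scaleR_left]
        bounded_linear_fst bounded_linear_snd)
qed

lemma holo_generated_inv_diff: "holo_generated UHP (inv_diff v)"
proof -
  define c where "c f w z = complex_of_real (Re (f w z))" for f :: "complex \<Rightarrow> complex \<Rightarrow> complex" and w z
  have m: "holo_generated UHP (c dy w)" "holo_generated UHP (c deta w)" for w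
    unfolding c_def using holo_generated_dy holo_generated_deta by (auto intro!: holo_generated_Re)
  have det: "c dy 1 z * c deta \<i> z - c dy \<i> z * c deta 1 z = of_real (jac_det z)" for z
    by (simp add: c_def jac_det_def jac11_def jac12_def jac21_def jac22_def)
  have "inv_diff v = (\<lambda>z. (of_real (fst v) * c deta \<i> z - of_real (snd v) * c dy \<i> z)
        / (c dy 1 z * c deta \<i> z - c dy \<i> z * c deta 1 z)
      + \<i> * ((of_real (snd v) * c dy 1 z - of_real (fst v) * c deta 1 z)
        / (c dy 1 z * c deta \<i> z - c dy \<i> z * c deta 1 z)))"
    unfolding det
    by (auto simp: fun_eq_iff inv_diff_def complex_eq_iff c_def jac11_def jac12_def jac21_def jac22_def)
  moreover have "holo_generated UHP (\<lambda>z. (of_real (fst v) * c deta \<i> z - of_real (snd v) * c dy \<i> z)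
        / (c dy 1 z * c deta \<i> z - c dy \<i> z * c deta 1 z)
      + \<i> * ((of_real (snd v) * c dy 1 z - of_real (fst v) * c deta 1 z)
        / (c dy 1 z * c deta \<i> z - c dy \<i> z * c deta 1 z)))"
    by (intro holo_generated.add holo_generated.mult holo_generated_divide holo_generated_diff m
        holo_generated_const) (use jac_det_nonzero in \<open>auto simp: det\<close>)
  ultimately show ?thesis by simp
qed

lemma continuous_on_root_param: "continuous_on UHP root_param"
  by (intro continuous_at_imp_continuous_on ballI has_derivative_continuous[OF has_derivative_root_param])
    simp

lemma open_root_param_image: "open (root_param ` UHP)"
  by (rule invariance_of_domain_gen[OF open_halfspace_Im_gt continuous_on_root_param inj_on_root_param])
    simp

lemma diffeomorphism_on_root_param_inverse:
  assumes inv: "\<forall>p\<in>root_param ` UHP. f p \<in> UHP \<and> root_param (f p) = p"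
  shows "diffeomorphism_on (root_param ` UHP) UHP f"
proof -
  have f_root_param: "f (root_param z) = z" if "Im z > 0" for z
  proof (rule inj_onD[OF inj_on_root_param])
    show "root_param (f (root_param z)) = root_param z" "f (root_param z) \<in> UHP"
      using inv that by auto
  qed (use that in simp)
  moreover have "bij_betw f (root_param ` UHP) UHP"
    using inv f_root_param by (auto simp: bij_betw_def inj_on_def image_iff)
  moreover have deriv: "(f has_derivative (\<lambda>v. inv_diff v (f p))) (at p)"
    if p: "p \<in> root_param ` UHP" for p
  proof (rule has_derivative_inverse_basic[OF has_derivative_root_param bounded_linear_inv_diff
        inv_diff_inverse _ open_root_param_image p])
    show "Im (f p) > 0" "Im (f p) > 0" using inv p by auto
    show "continuous (at p) f"
      using continuous_on_inverse_open[OF open_halfspace_Im_gt continuous_on_root_param _ f_root_param]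
        open_root_param_image p continuous_on_eq_continuous_at by auto
    show "\<And>q. q \<in> root_param ` UHP \<Longrightarrow> root_param (f q) = q" using inv by auto
  qed
  moreover have "smooth_on (root_param ` UHP) f"
  proof (rule smooth_on_comp_holo_generated[where S = UHP and w = inv_diff and q = "\<lambda>z. z" and g = f])
    show "\<forall>p\<in>root_param ` UHP. (f has_derivative (\<lambda>v. inv_diff v (f p))) (at p)"
      using deriv by blast
  qed (use inv holo_generated_inv_diff holo_generated_ident open_root_param_image
      open_halfspace_Im_gt in auto)
  moreover have "smooth_on UHP (inv_into (root_param ` UHP) f)"
  proof (rule smooth_on_Re_pair[OF open_halfspace_Im_gt holo_generated_y_of holo_generated_eta_of])
    show "\<forall>z\<in>UHP. inv_into (root_param ` UHP) f z = (Re (y_of z), Re (of_real (eta_of z)))"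
      using \<open>bij_betw f (root_param ` UHP) UHP\<close> f_root_param
      by (auto simp: root_param_def bij_betw_def intro!: inv_into_f_eq)
  qed
  ultimately show ?thesis
    using open_root_param_image open_halfspace_Im_gt unfolding diffeomorphism_on_def by blast
qed

lemma roots_unique_and_diffeomorphism:
  fixes root :: "real \<Rightarrow> real \<Rightarrow> complex \<Rightarrow> bool"
  assumes root_iff: "\<And>y \<eta> z. \<eta> > 0 \<Longrightarrow> Im z > 0 \<Longrightarrow> root y \<eta> z \<longleftrightarrow> root_param z = (y, \<eta>)"
  shows "(\<forall>y \<eta>. \<eta> > 0 \<longrightarrow> (\<forall>z1 z2. Im z1 > 0 \<and> Im z2 > 0 \<and> root y \<eta> z1 \<and> root y \<eta> z2 \<longrightarrow> z1 = z2))
     \<and> diffeomorphism_on {(y, \<eta>). \<eta> > 0 \<and> (\<exists>z. Im z > 0 \<and> root y \<eta> z)} UHP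
         (\<lambda>(y, \<eta>). THE z. Im z > 0 \<and> root y \<eta> z)"
proof -
  have root_param_root: "root (Re (y_of z)) (eta_of z) z" if "Im z > 0" for z
    using root_iff eta_of_pos that by (simp add: root_param_def)
  have unique: "\<forall>y \<eta>. \<eta> > 0 \<longrightarrow> (\<forall>z1 z2. Im z1 > 0 \<and> Im z2 > 0 \<and> root y \<eta> z1 \<and> root y \<eta> z2 \<longrightarrow> z1 = z2)"
  proof (intro allI impI)
    fix y \<eta> z1 z2 assume "\<eta> > 0" and z: "Im z1 > 0 \<and> Im z2 > 0 \<and> root y \<eta> z1 \<and> root y \<eta> z2"
    then have "root_param z1 = root_param z2" using root_iff by auto
    then show "z1 = z2" using z inj_onD[OF inj_on_root_param] by auto
  qed
  have image: "{(y, \<eta>). \<eta> > 0 \<and> (\<exists>z. Im z > 0 \<and> root y \<eta> z)} = root_param ` UHP"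
    using root_iff root_param_root eta_of_pos by (auto simp: root_param_def image_iff)
  have "\<forall>p\<in>root_param ` UHP. (\<lambda>(y, \<eta>). THE z. Im z > 0 \<and> root y \<eta> z) p \<in> UHP
      \<and> root_param ((\<lambda>(y, \<eta>). THE z. Im z > 0 \<and> root y \<eta> z) p) = p"
  proof
    fix p assume "p \<in> root_param ` UHP"
    then obtain z where z: "Im z > 0" "p = (Re (y_of z), eta_of z)" by (auto simp: root_param_def)
    have "(THE z'. Im z' > 0 \<and> root (Re (y_of z)) (eta_of z) z') = z"
      using z(1) root_param_root unique eta_of_pos by (intro the_equality) blast+
    then show "(\<lambda>(y, \<eta>). THE z. Im z > 0 \<and> root y \<eta> z) p \<in> UHP
        \<and> root_param ((\<lambda>(y, \<eta>). THE z. Im z > 0 \<and> root y \<eta> z) p) = p"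
      using z by (simp add: root_param_def)
  qed
  with unique show ?thesis
    unfolding image using diffeomorphism_on_root_param_inverse by blast
qed

end


section \<open>Supports of the limit measures\<close>

text \<open>
  The test function vanishes exactly on \<open>[0, C]\<close>, where all positive atoms of the empirical
  measures lie.
\<close>

lemma empirical_weak_conv_AE_bounds:
  assumes conv: "empirical_weak_conv a M" and sets: "sets M = sets borel" and fin: "finite_measure M"
    and bd: "\<And>N i. a N i > 0 \<Longrightarrow> a N i \<le> C"
  shows "AE x in M. 0 \<le> x \<and> x \<le> C"
proof -
  define f where "f = (\<lambda>x::real. min 1 (max 0 (-x) + max 0 (x - C)))"
  have cf: "continuous_on UNIV f" unfolding f_def by (intro continuous_intros)
  have f01: "0 \<le> f x \<and> f x \<le> 1" for x unfolding f_def by auto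
  have "((\<lambda>N. (\<Sum>i\<in>{i. a N i > 0}. f (a N i)) / real N) \<longlongrightarrow> integral\<^sup>L M f) sequentially"
  proof -
    have "bounded (range f)" unfolding bounded_real using f01 by (intro exI[of _ 1]) auto
    then show ?thesis using conv cf unfolding empirical_weak_conv_def by blast
  qed
  moreover have "(\<Sum>i\<in>{i. a N i > 0}. f (a N i)) = 0" for N
    by (rule sum.neutral) (use bd in \<open>auto simp: f_def\<close>)
  ultimately have "integral\<^sup>L M f = 0" by (simp add: LIMSEQ_const_iff)
  moreover have "f \<in> borel_measurable M"
    using borel_measurable_continuous_onI[OF cf] measurable_cong_sets[OF sets refl] by auto
  then have "integrable M f"
    by (rule finite_measure.integrable_const_bound[OF fin, rotated, of _ 1]) (use f01 in auto)
  ultimately have "AE x in M. f x = 0"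
    using integral_nonneg_eq_0_iff_AE[of M f] f01 by auto
  then show ?thesis
  proof eventually_elim
    case (elim x)
    then have "max 0 (-x) + max 0 (x - C) = 0" unfolding f_def by (auto simp: min_def split: if_splits)
    then show ?case by (auto simp: max_def split: if_splits)
  qed
qed

lemma extreme_char_params_beta_le_1:
  assumes "extreme_char_params ap am bp bm gp gm"
  shows "bp i \<le> 1" "bm i \<le> 1"
proof -
  have decreasing: "f i \<le> f 0" if "\<forall>i. f i \<ge> f (Suc i)" for f :: "nat \<Rightarrow> real"
    using that by (induction i) (auto intro: order_trans)
  have "bp i \<le> bp 0" "bm i \<le> bm 0"
    using assms by (auto intro!: decreasing simp: extreme_char_params_def)
  moreover have "bp 0 + bm 0 \<le> 1" "bp 0 \<ge> 0" "bm 0 \<ge> 0"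
    using assms by (auto simp: extreme_char_params_def)
  ultimately show "bp i \<le> 1" "bm i \<le> 1" by linarith+
qed


theorem mainTheorem8:
  fixes ap am bp bm :: "nat \<Rightarrow> nat \<Rightarrow> real" and gp gm :: "nat \<Rightarrow> real"
    and Ap Am Bp Bm :: "real measure" and Gp Gm :: real
    and F :: "complex \<Rightarrow> complex"
    and root_eq :: "real \<Rightarrow> real \<Rightarrow> complex \<Rightarrow> bool"
    and D :: "(real \<times> real) set"
  assumes params: "\<forall>N. extreme_char_params (ap N) (am N) (bp N) (bm N) (gp N) (gm N)"
    and bdd: "\<exists>C. \<forall>N i. ap N i \<le> C \<and> am N i \<le> C"
    and meas: "fin_cpt_measure Ap" "fin_cpt_measure Am" "fin_cpt_measure Bp" "fin_cpt_measure Bm"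
    and conv: "empirical_weak_conv ap Ap" "empirical_weak_conv am Am"
              "empirical_weak_conv bp Bp" "empirical_weak_conv bm Bm"
    and gconv: "((\<lambda>N. gp N / real N) \<longlongrightarrow> Gp) sequentially"
               "((\<lambda>N. gm N / real N) \<longlongrightarrow> Gm) sequentially"
    and Gpos: "Gp > 0" "Gm > 0"
    and F_def: "F = F_shift Ap Am Bp Bm Gp Gm"
    and root_eq_def: "root_eq = (\<lambda>y \<eta> z. 1 / z + 1 + (1 + z) * F z / complex_of_real \<eta>
                                            = complex_of_real y / complex_of_real \<eta>)"
    and D_def: "D = {(y, \<eta>). \<eta> > 0 \<and> (\<exists>z. Im z > 0 \<and> root_eq y \<eta> z)}"
  shows "(\<forall>y \<eta>. \<eta> > 0 \<longrightarrow>
            (\<forall>z1 z2. Im z1 > 0 \<and> Im z2 > 0 \<and> root_eq y \<eta> z1 \<and> root_eq y \<eta> z2 \<longrightarrow> z1 = z2))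
       \<and> diffeomorphism_on D {z. Im z > 0} (\<lambda>(y, \<eta>). THE z. Im z > 0 \<and> root_eq y \<eta> z)"
proof -
  \<comment> \<open>Only the supports of the limit measures are inherited from \<open>\<omega>(N)\<close>.\<close>
  obtain C where C: "\<forall>N i. ap N i \<le> C \<and> am N i \<le> C" using bdd by blast
  have sets: "sets M = sets borel" and finite: "finite_measure M" if "fin_cpt_measure M" for M
    using that unfolding fin_cpt_measure_def by auto
  have beta_le_1: "bp N i \<le> 1" "bm N i \<le> 1" for N i
    using extreme_char_params_beta_le_1 params by blast+
  interpret limit_parameters Ap Am Bp Bm Gp Gm C
  proof (rule limit_parameters.intro)
    show "sets Ap = sets borel" "sets Am = sets borel" "sets Bp = sets borel" "sets Bm = sets borel"
      using sets meas by blast+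
    show "finite_measure Ap" "finite_measure Am" "finite_measure Bp" "finite_measure Bm"
      using finite meas by blast+
    show "Gp > 0" "Gm \<ge> 0" using Gpos by auto
    show "AE x in Ap. 0 \<le> x \<and> x \<le> C"
      by (rule empirical_weak_conv_AE_bounds[OF conv(1) sets finite, OF meas(1) meas(1)]) (use C in auto)
    show "AE x in Am. 0 \<le> x \<and> x \<le> C"
      by (rule empirical_weak_conv_AE_bounds[OF conv(2) sets finite, OF meas(2) meas(2)]) (use C in auto)
    show "AE x in Bp. 0 \<le> x \<and> x \<le> 1"
      by (rule empirical_weak_conv_AE_bounds[OF conv(3) sets finite, OF meas(3) meas(3)]) (use beta_le_1 in auto)
    show "AE x in Bm. 0 \<le> x \<and> x \<le> 1"
      by (rule empirical_weak_conv_AE_bounds[OF conv(4) sets finite, OF meas(4) meas(4)]) (use beta_le_1 in auto)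
  qed
  show ?thesis
    unfolding D_def
    by (rule roots_unique_and_diffeomorphism) (simp add: root_eq_def F_def root_equation_iff)
qed

end
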